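(* Let $k,m$ be integers with $k\geqslant 3$ and $m>2k$, and let $n=2k-3$. Then $\alpha(m,n,k)=h(m,n,k)$, and every $(m,n,k)$-intersecting family of maximum cardinality equals $\mathcal{H}_t^{m,n,k}$ for some $t\in[n]$.
   Context: For positive integers $a\leqslant b$, $[a,b]=\{a,a+1,\dots,b\}$ and $[a]=[1,a]$; $\binom{X}{k}$ denotes the family of all $k$-subsets of a set $X$. A family of sets is intersecting if no two of its members are disjoint. For integers $0<k\leqslant n<2k<m$, an $(m,n,k)$-intersecting family is an intersecting family $\mathcal{F}$ with $\binom{[n]}{k}\subseteq\mathcal{F}\subseteq\binom{[m]}{k}$, and $\alpha(m,n,k)$ is the maximum cardinality of an $(m,n,k)$-intersecting family. Define $h(m,n,k)=\binom{n}{k}+\sum_{i=1}^{2k-n-1}\binom{n-1}{k-i-1}\binom{m-n}{i}$. For $t\in[n]$, define \[ \mathcal{H}_t^{m,n,k}=\binom{[n]}{k}\cup\bigcup_{i=1}^{2k-n-1}\left\{A\cup B\cup\{t\}\ \middle|\ A\in\binom{[n]\setminus\{t\}}{k-i-1},\ B\in\binom{[n+1,m]}{i}\right\}, \] an $(m,n,k)$-intersecting family of cardinality $h(m,n,k)$. *)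

theory Defs
  imports Main
begin

definition ksubsets :: "nat set \<Rightarrow> nat \<Rightarrow> nat set set" where
  "ksubsets X k = {A. A \<subseteq> X \<and> card A = k}"

definition intersecting :: "nat set set \<Rightarrow> bool" where
  "intersecting F \<longleftrightarrow> (\<forall>A\<in>F. \<forall>B\<in>F. A \<inter> B \<noteq> {})"

definition mnk_intersecting :: "nat \<Rightarrow> nat \<Rightarrow> nat \<Rightarrow> nat set set \<Rightarrow> bool" where
  "mnk_intersecting m n k F \<longleftrightarrow> intersecting F \<and>
     ksubsets {1..n} k \<subseteq> F \<and> F \<subseteq> ksubsets {1..m} k"

definition alpha :: "nat \<Rightarrow> nat \<Rightarrow> nat \<Rightarrow> nat" where
  "alpha m n k = Max (card ` {F. mnk_intersecting m n k F})"

definition h :: "nat \<Rightarrow> nat \<Rightarrow> nat \<Rightarrow> nat" where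
  "h m n k = (n choose k) +
     (\<Sum>i=1..2*k-n-1. ((n-1) choose (k-i-1)) * ((m-n) choose i))"

definition H :: "nat \<Rightarrow> nat \<Rightarrow> nat \<Rightarrow> nat \<Rightarrow> nat set set" where
  "H m n k t = ksubsets {1..n} k \<union>
     (\<Union>i\<in>{1..2*k-n-1}. {A \<union> B \<union> {t} | A B.
        A \<in> ksubsets ({1..n} - {t}) (k-i-1) \<and> B \<in> ksubsets {n+1..m} i})"

end

theory Submission
  imports Defs "HOL-Combinatorics.Multiset_Permutations"
begin

text \<open>Write \<open>n = 2s + 1\<close> with \<open>s = k - 2\<close>. A member of \<open>F\<close> not contained in \<open>[n]\<close> meets
  \<open>[n]\<close> in at least \<open>k - 2\<close> points, since otherwise it misses some \<open>k\<close>-subset of \<open>[n]\<close>.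
  So it is \<open>S \<union> e\<close> with \<open>S\<close> an \<open>s\<close>-subset of \<open>[n]\<close> and \<open>e\<close> a pair of new points, or
  \<open>([n] - S) \<union> {y}\<close> with \<open>y\<close> a new point. Grouping these members by \<open>S\<close>, each \<open>S\<close> gets a
  weight of at most \<open>C(m - n, 2)\<close>. Pairs and points linked to the same \<open>S\<close> must meet, so a
  weight above \<open>m - n\<close> leaves room for pairs only, and two disjoint such heavy sets are
  impossible because their pair families would be cross-intersecting. Hence the heavy sets form
  an intersecting family of \<open>s\<close>-subsets of a \<open>(2s + 1)\<close>-set, which by Katona's cycle argument
  has at most \<open>C(2s, s - 1)\<close> members, with equality only for a star. Adding up the weights gives
  \<open>|F| \<le> h(m, n, k)\<close>; in the case of equality the centre \<open>t\<close> of the star determines all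
  linked pairs and points, and they are exactly those of \<open>H\<^sub>t\<close>.\<close>

section \<open>Intersecting families of pairs\<close>

lemma finite_subsets_with: "finite Y \<Longrightarrow> finite {e. e \<subseteq> Y \<and> P e}"
  by (rule finite_subset[of _ "Pow Y"]) auto

lemma card_2_containing_obtain:
  assumes "card e = 2" "b \<in> e" obtains c where "e = {b, c}" "c \<noteq> b"
proof -
  have "card (e - {b}) = 1" using assms by simp
  then obtain c where c: "e - {b} = {c}" by (auto simp: card_1_singleton_iff)
  then have "e = {b, c}" "c \<noteq> b" using assms(2) by auto
  then show thesis by (rule that)
qed

lemma card_pairs_containing_le:
  assumes Y: "finite Y" and a: "a \<in> Y"
  shows "card {e. e \<subseteq> Y \<and> card e = 2 \<and> a \<in> e} \<le> card Y - 1"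
proof -
  have "{e. e \<subseteq> Y \<and> card e = 2 \<and> a \<in> e} \<subseteq> (\<lambda>z. {a, z}) ` (Y - {a})"
  proof
    fix e assume e: "e \<in> {e. e \<subseteq> Y \<and> card e = 2 \<and> a \<in> e}"
    then have "card e = 2" "a \<in> e" by auto
    then obtain c where "e = {a, c}" "c \<noteq> a" by (rule card_2_containing_obtain)
    then show "e \<in> (\<lambda>z. {a, z}) ` (Y - {a})" using e by auto
  qed
  then have "card {e. e \<subseteq> Y \<and> card e = 2 \<and> a \<in> e} \<le> card ((\<lambda>z. {a, z}) ` (Y - {a}))"
    by (rule card_mono[rotated]) (use Y in auto)
  also have "\<dots> \<le> card (Y - {a})" by (rule card_image_le) (use Y in auto)
  finally show ?thesis using Y a by simp
qed

lemma intersecting_pairs_star_or_triangle: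
  assumes G: "G \<subseteq> {e. card e = 2}" and I: "\<forall>e1\<in>G. \<forall>e2\<in>G. e1 \<inter> e2 \<noteq> {}"
  shows "(\<exists>a. \<forall>e\<in>G. a \<in> e) \<or> (\<exists>a b c. G \<subseteq> {e. e \<subseteq> {a, b, c} \<and> card e = 2})"
proof (cases "G = {}")
  case False
  then obtain e0 where e0: "e0 \<in> G" by blast
  then obtain a b where ab: "e0 = {a, b}" "a \<noteq> b" using G by (auto simp: card_2_iff)
  show ?thesis
  proof (rule ccontr)
    assume no: "\<not> ?thesis"
    then obtain e1 e2 where e1: "e1 \<in> G" "a \<notin> e1" and e2: "e2 \<in> G" "b \<notin> e2" by blast
    have "e0 \<inter> e1 \<noteq> {}" "e0 \<inter> e2 \<noteq> {}" using I e0 e1(1) e2(1) by blast+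
    then have "b \<in> e1" "a \<in> e2" using ab(1) e1(2) e2(2) by auto
    moreover have "card e1 = 2" "card e2 = 2" using e1(1) e2(1) G by auto
    ultimately obtain c d where c: "e1 = {b, c}" "c \<noteq> b" and d: "e2 = {a, d}" "d \<noteq> a"
      by (meson card_2_containing_obtain)
    have "c \<noteq> a" using c e1(2) by auto
    have "e1 \<inter> e2 \<noteq> {}" using I e1(1) e2(1) by blast
    then have "c = d" using c d e1(2) e2(2) by auto
    have "e \<subseteq> {a, b, c}" if e: "e \<in> G" for e
    proof
      fix u assume u: "u \<in> e"
      have "card e = 2" using e G by auto
      then obtain v where v: "e = {u, v}" "v \<noteq> u" using u by (rule card_2_containing_obtain)
      have "e \<inter> e0 \<noteq> {}" "e \<inter> e1 \<noteq> {}" "e \<inter> e2 \<noteq> {}" using I e e0 e1(1) e2(1) by blast+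
      then show "u \<in> {a, b, c}" using v ab c d \<open>c = d\<close> \<open>c \<noteq> a\<close> by auto
    qed
    then have "G \<subseteq> {e. e \<subseteq> {a, b, c} \<and> card e = 2}" using G by blast
    then show False using no by blast
  qed
next
  case True then show ?thesis by blast
qed

lemma card_intersecting_pairs_le:
  assumes Y: "finite Y" "card Y \<ge> 4" and G: "G \<subseteq> {e. e \<subseteq> Y \<and> card e = 2}"
    and I: "\<forall>e1\<in>G. \<forall>e2\<in>G. e1 \<inter> e2 \<noteq> {}"
  shows "card G \<le> card Y - 1"
proof -
  have "G \<subseteq> {e. card e = 2}" using G by auto
  then consider a where "\<forall>e\<in>G. a \<in> e" | a b c where "G \<subseteq> {e. e \<subseteq> {a, b, c} \<and> card e = 2}"
    using intersecting_pairs_star_or_triangle[OF _ I] by blast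
  then show ?thesis
  proof cases
    case (1 a)
    show ?thesis
    proof (cases "G = {}")
      case False
      then obtain e where "e \<in> G" by blast
      then have "a \<in> Y" using 1 G by auto
      have "G \<subseteq> {e. e \<subseteq> Y \<and> card e = 2 \<and> a \<in> e}" using 1 G by auto
      then have "card G \<le> card {e. e \<subseteq> Y \<and> card e = 2 \<and> a \<in> e}"
        by (rule card_mono[rotated]) (rule finite_subsets_with[OF Y(1)])
      then show ?thesis using card_pairs_containing_le[OF Y(1) \<open>a \<in> Y\<close>] by linarith
    qed simp
  next
    case (2 a b c)
    have "card {a, b, c} \<le> 3" by (simp add: card_insert_if)
    then have "card {a, b, c} choose 2 \<le> 3 choose 2" by (rule binomial_right_mono)
    moreover have "(3::nat) choose 2 = 3" by (simp add: choose_two)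
    ultimately have "card {e. e \<subseteq> {a, b, c} \<and> card e = 2} \<le> 3"
      using n_subsets[of "{a, b, c}" 2] by simp
    moreover have "card G \<le> card {e. e \<subseteq> {a, b, c} \<and> card e = 2}"
      by (rule card_mono[OF finite_subsets_with 2]) simp
    ultimately show ?thesis using Y by linarith
  qed
qed

lemma card_pairs_meeting_disjoint_pairs_le:
  assumes d: "e1 \<inter> e2 = {}" and c: "card e1 = 2" "card e2 = 2"
    and G: "\<forall>e\<in>G. card e = 2 \<and> e \<inter> e1 \<noteq> {} \<and> e \<inter> e2 \<noteq> {}"
  shows "card G \<le> 4"
proof -
  have f: "finite e1" "finite e2" using c by (auto intro: card_ge_0_finite)
  have "G \<subseteq> (\<lambda>(u, v). {u, v}) ` (e1 \<times> e2)"
  proof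
    fix e assume e: "e \<in> G"
    then have "e \<inter> e1 \<noteq> {}" "e \<inter> e2 \<noteq> {}" using G by auto
    then obtain x y where xy: "x \<in> e" "x \<in> e1" "y \<in> e" "y \<in> e2" by blast
    have "card e = 2" using G e by auto
    then obtain z where "e = {x, z}" "z \<noteq> x" using xy(1) by (rule card_2_containing_obtain)
    moreover have "x \<noteq> y" using xy d by auto
    ultimately have "e = {x, y}" using xy(3) by auto
    then show "e \<in> (\<lambda>(u, v). {u, v}) ` (e1 \<times> e2)" using xy(2,4) by (auto intro: image_eqI[of _ _ "(x, y)"])
  qed
  then have "card G \<le> card ((\<lambda>(u, v). {u, v}) ` (e1 \<times> e2))"
    by (rule card_mono[rotated]) (use f in auto)
  also have "\<dots> \<le> card (e1 \<times> e2)" by (rule card_image_le) (use f in auto)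
  also have "\<dots> = 4" using c by (simp add: card_cartesian_product)
  finally show ?thesis .
qed

text \<open>A family of more than \<open>|Y|\<close> pairs contains two disjoint pairs, and only four pairs meet
  both of them.\<close>
lemma cross_intersecting_pairs_small:
  assumes Y: "finite Y" "card Y \<ge> 4"
    and G1: "G1 \<subseteq> {e. e \<subseteq> Y \<and> card e = 2}" and G2: "G2 \<subseteq> {e. e \<subseteq> Y \<and> card e = 2}"
    and X: "\<forall>e\<in>G1. \<forall>f\<in>G2. e \<inter> f \<noteq> {}"
    and c1: "card G1 > card Y"
  shows "card G2 \<le> card Y"
proof -
  have "\<not> (\<forall>e1\<in>G1. \<forall>e2\<in>G1. e1 \<inter> e2 \<noteq> {})"
  proof
    assume "\<forall>e1\<in>G1. \<forall>e2\<in>G1. e1 \<inter> e2 \<noteq> {}"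
    then have "card G1 \<le> card Y - 1" by (rule card_intersecting_pairs_le[OF Y G1])
    then show False using c1 by linarith
  qed
  then obtain e1 e2 where e: "e1 \<in> G1" "e2 \<in> G1" "e1 \<inter> e2 = {}" by blast
  have "card e1 = 2" "card e2 = 2" using e G1 by auto
  moreover have "card e = 2 \<and> e \<inter> e1 \<noteq> {} \<and> e \<inter> e2 \<noteq> {}" if "e \<in> G2" for e
    using X e(1,2) G2 that by (auto simp: Int_commute)
  ultimately have "card G2 \<le> 4" using card_pairs_meeting_disjoint_pairs_le[OF e(3)] by blast
  then show ?thesis using Y by linarith
qed

section \<open>Katona's cycle method for \<open>s\<close>-subsets of a \<open>(2s + 1)\<close>-set\<close>

definition arc :: "nat \<Rightarrow> nat \<Rightarrow> nat \<Rightarrow> nat set" where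
  "arc n s j = (\<lambda>i. (j + i) mod n) ` {..<s}"

lemma mod_eq_if_less_double: "(a::nat) < 2*n \<Longrightarrow> a mod n = (if a < n then a else a - n)"
  by (simp add: le_mod_geq)

lemma arc_subset: "0 < n \<Longrightarrow> arc n s j \<subseteq> {..<n}"
  unfolding arc_def by auto

lemma card_arc:
  assumes "s \<le> n" "j < n"
  shows "card (arc n s j) = s"
proof -
  have "inj_on (\<lambda>i. (j + i) mod n) {..<s}"
  proof (rule inj_onI)
    fix x y assume xy: "x \<in> {..<s}" "y \<in> {..<s}" "(j + x) mod n = (j + y) mod n"
    have "j + x < 2*n" "j + y < 2*n" using xy assms by auto
    then show "x = y" using xy(3) mod_eq_if_less_double[of "j+x" n] mod_eq_if_less_double[of "j+y" n] xy assms
      by (auto split: if_splits)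
  qed
  then show ?thesis unfolding arc_def by (simp add: card_image)
qed

lemma mem_arc_iff:
  assumes "a < n" "j < n" "s \<le> n"
  shows "a \<in> arc n s j \<longleftrightarrow> (if j \<le> a then a - j < s else a + n - j < s)"
proof
  assume "a \<in> arc n s j"
  then obtain i where i: "i < s" "a = (j + i) mod n" unfolding arc_def by auto
  have "j + i < 2*n" using assms i by linarith
  then show "if j \<le> a then a - j < s else a + n - j < s"
    using i assms mod_eq_if_less_double[of "j + i" n] by (auto split: if_splits)
next
  assume h: "if j \<le> a then a - j < s else a + n - j < s"
  show "a \<in> arc n s j"
  proof (cases "j \<le> a")
    case True
    then have "a = (j + (a - j)) mod n" using assms by simp
    then show ?thesis unfolding arc_def using h True by (auto intro!: image_eqI[where x="a-j"])
  next
    case False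
    have "(j + (a + n - j)) mod n = a"
      using mod_eq_if_less_double[of "j + (a + n - j)" n] assms False by auto
    then show ?thesis unfolding arc_def using h False by (auto intro!: image_eqI[where x="a + n - j"])
  qed
qed

lemma arcs_through_iff:
  assumes "c < n" "j < n" "s \<le> n"
  shows "c \<in> arc n s j \<longleftrightarrow> j \<in> (\<lambda>i. (c + n - i) mod n) ` {..<s}"
proof -
  have "j \<in> (\<lambda>i. (c + n - i) mod n) ` {..<s} \<longleftrightarrow> (if j \<le> c then c - j < s else c + n - j < s)"
  proof
    assume "j \<in> (\<lambda>i. (c + n - i) mod n) ` {..<s}"
    then obtain i where "i < s" "j = (c + n - i) mod n" by auto
    then show "if j \<le> c then c - j < s else c + n - j < s"
      using assms mod_eq_if_less_double[of "c + n - i" n] by (auto split: if_splits)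
  next
    assume h: "if j \<le> c then c - j < s else c + n - j < s"
    define i where "i = (if j \<le> c then c - j else c + n - j)"
    have "i < s" "j = (c + n - i) mod n"
      using h assms mod_eq_if_less_double[of "c + n - i" n] unfolding i_def by (auto split: if_splits)
    then show "j \<in> (\<lambda>i. (c + n - i) mod n) ` {..<s}" by blast
  qed
  then show ?thesis using mem_arc_iff[OF assms] by simp
qed

lemma arc_disjoint_next:
  assumes "2*s \<le> n" "j < n"
  shows "arc n s j \<inter> arc n s ((j + s) mod n) = {}"
proof -
  have "a \<notin> arc n s ((j + s) mod n)" if "a \<in> arc n s j" for a
  proof -
    have a: "a < n" using that arc_subset[of n s j] assms by auto
    have "(j + s) mod n < n" using assms by auto
    then show ?thesis using that mem_arc_iff[of a n j s] mem_arc_iff[of a n "(j + s) mod n" s] a assms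
      mod_eq_if_less_double[of "j + s" n] by (auto split: if_splits)
  qed
  then show ?thesis by auto
qed

lemma bij_betw_add_mod: "0 < (n::nat) \<Longrightarrow> bij_betw (\<lambda>j. (j + s) mod n) {..<n} {..<n}"
proof -
  assume n: "0 < n"
  have inj: "inj_on (\<lambda>j. (j + s) mod n) {..<n}"
  proof (rule inj_onI)
    fix x y assume xy: "x \<in> {..<n}" "y \<in> {..<n}" "(x + s) mod n = (y + s) mod n"
    have "(x + s mod n) mod n = (y + s mod n) mod n" using xy(3) by (simp only: mod_add_right_eq)
    moreover have "s mod n < n" using n by simp
    then have "x + s mod n < 2*n" "y + s mod n < 2*n" using xy(1,2) unfolding lessThan_iff by linarith+
    ultimately show "x = y"
      using xy mod_eq_if_less_double[of "x + s mod n" n] mod_eq_if_less_double[of "y + s mod n" n]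
      by (auto split: if_splits)
  qed
  then show ?thesis
    using n by (simp add: bij_betw_def endo_inj_surj image_subset_iff)
qed

lemma sub_mod_eq_if: "(j::nat) < n \<Longrightarrow> i \<le> n \<Longrightarrow> (j + n - i) mod n = (if i \<le> j then j - i else j + n - i)"
  using mod_eq_if_less_double[of "j + n - i" n] by auto

lemma shift_free_unique_gap:
  assumes J: "J \<subseteq> {..<2*s+1}" "card J = s" and opp: "\<forall>j\<in>J. (j + s) mod (2*s+1) \<notin> J"
  shows "\<exists>j0<2*s+1. \<forall>x<2*s+1. x \<notin> J \<and> (x + s) mod (2*s+1) \<notin> J \<longleftrightarrow> x = j0"
proof -
  define n where "n = 2*s+1"
  define f where "f j = (j + s) mod n" for j
  define J' where "J' = {j. j < n \<and> f j \<in> J}"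
  have "inj_on f {..<n}" "f ` {..<n} = {..<n}"
    using bij_betw_add_mod[of n s] unfolding n_def f_def bij_betw_def by auto
  moreover have "f ` J' = J" unfolding J'_def using J(1) \<open>f ` {..<n} = {..<n}\<close> n_def by auto
  moreover have "J' \<subseteq> {..<n}" unfolding J'_def by auto
  ultimately have cJ': "card J' = s" using J(2) by (metis card_image inj_on_subset)
  have disj: "J \<inter> J' = {}" using opp unfolding J'_def f_def n_def by auto
  have sub: "J \<union> J' \<subseteq> {..<n}" using J(1) unfolding J'_def n_def by auto
  have fin: "finite J" "finite J'" using sub finite_subset by auto
  have "card ({..<n} - (J \<union> J')) = 1"
    using card_Diff_subset[OF _ sub] card_Un_disjoint[OF fin disj] J(2) cJ' fin n_def by simp
  then obtain j0 where j0: "{..<n} - (J \<union> J') = {j0}" by (meson card_1_singletonE)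
  then show ?thesis unfolding n_def J'_def f_def by auto
qed

text \<open>Stepping twice by \<open>s\<close> from the gap \<open>j\<^sub>0\<close> (that is, back by one) forces
  \<open>j\<^sub>0 - 1, \<dots>, j\<^sub>0 - s\<close> into \<open>J\<close>.\<close>
lemma shift_free_positions_consecutive:
  assumes s: "s \<ge> 1" and J: "J \<subseteq> {..<2*s+1}" "card J = s"
    and opp: "\<forall>j\<in>J. (j + s) mod (2*s+1) \<notin> J"
  shows "\<exists>j0<2*s+1. J = (\<lambda>i. (j0 + (2*s+1) - i) mod (2*s+1)) ` {1..s}"
proof -
  define n where "n = 2*s+1"
  define f where "f j = (j + s) mod n" for j
  obtain j0 where j0: "j0 < n" and gap: "\<And>x. x < n \<Longrightarrow> x \<notin> J \<and> f x \<notin> J \<longleftrightarrow> x = j0"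
    using shift_free_unique_gap[OF J opp] unfolding n_def f_def by blast
  have n: "0 < n" "s < n" unfolding n_def using s by auto
  have f_if: "f x = (if x + s < n then x + s else x + s - n)" if "x < n" for x
    unfolding f_def using that n mod_eq_if_less_double[of "x + s" n] by auto
  have fill: "f (f x) \<in> J" if "x < n" "f x \<notin> J" "f x \<noteq> j0" for x
    using gap[of "f x"] that n unfolding f_def by auto
  define d where "d i = (j0 + n - i) mod n" for i
  have d_if: "d i = (if i \<le> j0 then j0 - i else j0 + n - i)" if "i \<le> n" for i
    unfolding d_def using sub_mod_eq_if[OF j0 that] .
  have dJ: "d (Suc i) \<in> J" if "i < s" for i
    using that
  proof (induction i)
    case 0
    have "f j0 \<notin> J" using gap[OF j0] by simp
    moreover have "f j0 \<noteq> j0" "f (f j0) = d 1" using j0 s f_if d_if unfolding n_def by auto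
    ultimately show ?case using fill[OF j0] by simp
  next
    case (Suc i)
    have "f (d (Suc i)) \<notin> J" using Suc opp unfolding f_def n_def by auto
    moreover have "d (Suc i) < n" "f (d (Suc i)) \<noteq> j0" "f (f (d (Suc i))) = d (Suc (Suc i))"
      using Suc.prems j0 n f_if d_if unfolding n_def by auto
    ultimately show ?case using fill by metis
  qed
  have "d ` {1..s} = J"
  proof (rule card_subset_eq)
    show "finite J" using J(1) finite_subset by blast
    show "d ` {1..s} \<subseteq> J" unfolding image_Suc_lessThan[symmetric] using dJ by auto
    have "inj_on d {1..s}" using n by (intro inj_onI) (auto simp: d_if split: if_splits)
    then show "card (d ` {1..s}) = card J" using J(2) by (simp add: card_image)
  qed
  then show ?thesis using j0 unfolding d_def n_def by blast
qed

lemma arcs_through_common_point: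
  assumes "s \<ge> 1" "J \<subseteq> {..<2*s+1}" "card J = s" "\<forall>j\<in>J. (j + s) mod (2*s+1) \<notin> J"
  shows "\<exists>c<2*s+1. J = {j. j < 2*s+1 \<and> c \<in> arc (2*s+1) s j}"
proof -
  define n where "n = 2*s+1"
  obtain j0 where j0: "j0 < n" "J = (\<lambda>i. (j0 + n - i) mod n) ` {1..s}"
    using shift_free_positions_consecutive[OF assms] unfolding n_def by blast
  define c where "c = (j0 + n - 1) mod n"
  have c: "c < n" unfolding c_def n_def by simp
  have shift: "(c + n - i) mod n = (j0 + n - Suc i) mod n" if "i < s" for i
    using that j0(1) c sub_mod_eq_if[of c n i] sub_mod_eq_if[of j0 n "Suc i"] sub_mod_eq_if[of j0 n 1]
    unfolding c_def n_def by auto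
  then have "(\<lambda>i. (c + n - i) mod n) ` {..<s} = J"
    unfolding j0(2) image_Suc_lessThan[symmetric] image_image by (auto intro!: image_cong simp: shift)
  moreover have "{j. j < n \<and> c \<in> arc n s j} = (\<lambda>i. (c + n - i) mod n) ` {..<s}"
    using arcs_through_iff[of c n _ s] c unfolding n_def by auto
  ultimately show ?thesis using c unfolding n_def by auto
qed

lemma card_shift_free_le:
  assumes J: "J \<subseteq> {..<2*s+1}" and opp: "\<forall>j\<in>J. (j + s) mod (2*s+1) \<notin> J"
  shows "card J \<le> s"
proof -
  define f where "f j = (j + s) mod (2*s+1)" for j
  have "inj_on f {..<2*s+1}"
    using bij_betw_add_mod[of "2*s+1" s] unfolding f_def bij_betw_def by auto
  then have "card (f ` J) = card J" using J by (metis card_image inj_on_subset)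
  moreover have "J \<inter> f ` J = {}" using opp unfolding f_def by auto
  moreover have "J \<union> f ` J \<subseteq> {..<2*s+1}" using J unfolding f_def by auto
  moreover have "finite J" using J finite_subset by blast
  ultimately have "card J + card J = card (J \<union> f ` J)" by (simp add: card_Un_disjoint)
  also have "\<dots> \<le> 2*s+1" using card_mono[OF _ \<open>J \<union> f ` J \<subseteq> {..<2*s+1}\<close>] by simp
  finally show ?thesis by linarith
qed

definition list_arc :: "nat \<Rightarrow> 'a list \<Rightarrow> nat \<Rightarrow> 'a set" where
  "list_arc s xs j = (\<lambda>a. xs ! a) ` arc (length xs) s j"

definition arc_positions :: "'a set set \<Rightarrow> nat \<Rightarrow> 'a list \<Rightarrow> nat set" where
  "arc_positions F s xs = {j. j < length xs \<and> list_arc s xs j \<in> F}"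

definition arcs_centred :: "'a set set \<Rightarrow> nat \<Rightarrow> 'a list \<Rightarrow> 'a \<Rightarrow> bool" where
  "arcs_centred F s xs x \<longleftrightarrow> (\<forall>j<length xs. list_arc s xs j \<in> F \<longleftrightarrow> x \<in> list_arc s xs j)"

lemma nth_mem_image_nth_iff:
  assumes "distinct xs" "a < length xs" "P \<subseteq> {..<length xs}"
  shows "xs ! a \<in> (\<lambda>b. xs ! b) ` P \<longleftrightarrow> a \<in> P"
  using assms nth_eq_iff_index_eq by fastforce

lemma list_arc_disjoint_next:
  assumes "distinct xs" "length xs = 2*s+1" "j < length xs"
  shows "list_arc s xs j \<inter> list_arc s xs ((j + s) mod length xs) = {}"
proof -
  let ?A = "arc (length xs) s j" and ?B = "arc (length xs) s ((j + s) mod length xs)"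
  have "inj_on (\<lambda>b. xs ! b) {..<length xs}" using assms(1) by (simp add: inj_on_nth)
  moreover have "?A \<subseteq> {..<length xs}" "?B \<subseteq> {..<length xs}" using arc_subset assms(2) by auto
  ultimately have "(\<lambda>b. xs ! b) ` ?A \<inter> (\<lambda>b. xs ! b) ` ?B = (\<lambda>b. xs ! b) ` (?A \<inter> ?B)"
    by (simp add: inj_on_image_Int)
  also have "?A \<inter> ?B = {}" using arc_disjoint_next[of s "length xs" j] assms(2,3) by simp
  finally show ?thesis unfolding list_arc_def by simp
qed

context
  fixes F :: "'a set set" and s :: nat and xs :: "'a list"
  assumes F: "\<forall>A\<in>F. \<forall>B\<in>F. A \<inter> B \<noteq> {}"
    and xs: "distinct xs" "length xs = 2*s+1"
begin

lemma arc_positions_shift_free: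
  "\<forall>j\<in>arc_positions F s xs. (j + s) mod (2*s+1) \<notin> arc_positions F s xs"
proof (intro ballI notI)
  fix j assume "j \<in> arc_positions F s xs" "(j + s) mod (2*s+1) \<in> arc_positions F s xs"
  then have "j < length xs" "list_arc s xs j \<in> F" "list_arc s xs ((j + s) mod length xs) \<in> F"
    unfolding arc_positions_def xs(2) by auto
  then show False using F list_arc_disjoint_next[OF xs] by blast
qed

lemma arc_positions_subset: "arc_positions F s xs \<subseteq> {..<2*s+1}"
  using xs(2) unfolding arc_positions_def by auto

lemma card_arc_positions_le: "card (arc_positions F s xs) \<le> s"
  by (rule card_shift_free_le[OF arc_positions_subset arc_positions_shift_free])

lemma arc_positions_centred:
  assumes s: "s \<ge> 1" and card: "card (arc_positions F s xs) = s"
  shows "\<exists>x\<in>set xs. arcs_centred F s xs x"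
proof -
  obtain c where c: "c < 2*s+1" "arc_positions F s xs = {j. j < 2*s+1 \<and> c \<in> arc (2*s+1) s j}"
    using arcs_through_common_point[OF s arc_positions_subset card arc_positions_shift_free] by blast
  have "list_arc s xs j \<in> F \<longleftrightarrow> xs ! c \<in> list_arc s xs j" if "j < 2*s+1" for j
  proof -
    have "list_arc s xs j \<in> F \<longleftrightarrow> j \<in> arc_positions F s xs"
      using that xs(2) unfolding arc_positions_def by simp
    also have "\<dots> \<longleftrightarrow> c \<in> arc (2*s+1) s j" using c(2) that by simp
    also have "\<dots> \<longleftrightarrow> xs ! c \<in> list_arc s xs j"
    proof -
      have "arc (length xs) s j \<subseteq> {..<length xs}" using arc_subset xs(2) by simp
      then show ?thesis
        unfolding list_arc_def using nth_mem_image_nth_iff[OF xs(1)] c(1) xs(2) by simp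
    qed
    finally show ?thesis .
  qed
  moreover have "xs ! c \<in> set xs" using c(1) xs(2) by simp
  ultimately show ?thesis unfolding arcs_centred_def xs(2) by blast
qed

end

lemma ex_bij_betw_image_eq:
  assumes "finite X" "S \<subseteq> X" "T \<subseteq> X" "card S = card T"
  shows "\<exists>\<sigma>. bij_betw \<sigma> X X \<and> \<sigma> ` S = T"
proof -
  obtain f where f: "bij_betw f S T" using finite_same_card_bij assms by (metis finite_subset)
  have "card (X - S) = card (X - T)" using assms by (simp add: card_Diff_subset finite_subset)
  then obtain g where g: "bij_betw g (X - S) (X - T)" using finite_same_card_bij assms
    by (metis finite_Diff)
  define \<sigma> where "\<sigma> x = (if x \<in> S then f x else g x)" for x
  have f': "bij_betw \<sigma> S T" using f unfolding \<sigma>_def by (rule bij_betw_cong[THEN iffD1, rotated]) auto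
  have g': "bij_betw \<sigma> (X - S) (X - T)" using g unfolding \<sigma>_def
    by (rule bij_betw_cong[THEN iffD1, rotated]) auto
  have "bij_betw \<sigma> (S \<union> (X - S)) (T \<union> (X - T))" by (rule bij_betw_combine[OF f' g']) auto
  moreover have "S \<union> (X - S) = X" "T \<union> (X - T) = X" using assms by auto
  ultimately show ?thesis using f' bij_betw_imp_surj_on by metis
qed

lemma list_arc_map:
  assumes "j < length xs"
  shows "list_arc s (map \<sigma> xs) j = \<sigma> ` list_arc s xs j"
proof -
  have "arc (length xs) s j \<subseteq> {..<length xs}" using assms by (intro arc_subset) auto
  then show ?thesis unfolding list_arc_def by (force simp: image_image)
qed

lemma list_arc_permutation:
  assumes "xs \<in> permutations_of_set X" "s \<le> length xs" "j < length xs"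
  shows "list_arc s xs j \<subseteq> X" "card (list_arc s xs j) = s"
proof -
  have xs: "set xs = X" "distinct xs" using assms(1) permutations_of_setD by auto
  have sub: "arc (length xs) s j \<subseteq> {..<length xs}" using assms(3) by (intro arc_subset) auto
  then show "list_arc s xs j \<subseteq> X" unfolding list_arc_def using xs by auto
  have "inj_on (\<lambda>a. xs ! a) (arc (length xs) s j)" using inj_on_nth[OF xs(2)] sub by auto
  then show "card (list_arc s xs j) = s"
    unfolding list_arc_def using card_image card_arc[OF assms(2,3)] by metis
qed

definition arc_occurrences :: "'a set \<Rightarrow> nat \<Rightarrow> 'a set \<Rightarrow> ('a list \<times> nat) set" where
  "arc_occurrences X s S =
     {(xs, j). xs \<in> permutations_of_set X \<and> j < length xs \<and> list_arc s xs j = S}"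

lemma finite_arc_occurrences: "finite X \<Longrightarrow> finite (arc_occurrences X s S)"
  by (rule finite_subset[of _ "permutations_of_set X \<times> {..<card X}"])
     (auto simp: arc_occurrences_def length_finite_permutations_of_set)

lemma card_arc_occurrences_le:
  assumes X: "finite X" and ST: "S \<subseteq> X" "T \<subseteq> X" "card S = card T"
  shows "card (arc_occurrences X s S) \<le> card (arc_occurrences X s T)"
proof -
  obtain \<sigma> where \<sigma>: "bij_betw \<sigma> X X" "\<sigma> ` S = T" using ex_bij_betw_image_eq[OF X ST] by blast
  have inj: "inj_on \<sigma> X" using \<sigma> bij_betw_def by blast
  let ?f = "\<lambda>(xs, j). (map \<sigma> xs, j)"
  have "?f ` arc_occurrences X s S \<subseteq> arc_occurrences X s T"
  proof
    fix y assume "y \<in> ?f ` arc_occurrences X s S"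
    then obtain xs j where y: "y = (map \<sigma> xs, j)" "xs \<in> permutations_of_set X" "j < length xs"
      "list_arc s xs j = S"
      unfolding arc_occurrences_def by auto
    have "map \<sigma> xs \<in> permutations_of_set X"
      using permutations_of_setD[OF y(2)] \<sigma> inj
      by (auto simp: permutations_of_set_def distinct_map bij_betw_def)
    then show "y \<in> arc_occurrences X s T"
      using y \<sigma> list_arc_map[OF y(3), of s \<sigma>] unfolding arc_occurrences_def by auto
  qed
  moreover have "inj_on ?f (arc_occurrences X s S)"
  proof (rule inj_onI)
    fix a b assume ab: "a \<in> arc_occurrences X s S" "b \<in> arc_occurrences X s S" "?f a = ?f b"
    obtain xs j where a: "a = (xs, j)" "set xs = X"
      using ab(1) unfolding arc_occurrences_def permutations_of_set_def by auto
    obtain ys i where b: "b = (ys, i)" "set ys = X"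
      using ab(2) unfolding arc_occurrences_def permutations_of_set_def by auto
    have "map \<sigma> xs = map \<sigma> ys" "j = i" using ab(3) a b by auto
    then show "a = b" using inj a b by (simp add: inj_on_map_eq_map)
  qed
  ultimately show ?thesis using card_inj_on_le finite_arc_occurrences X by metis
qed

lemma card_arc_occurrences_eq:
  "finite X \<Longrightarrow> S \<subseteq> X \<Longrightarrow> T \<subseteq> X \<Longrightarrow> card S = card T \<Longrightarrow>
    card (arc_occurrences X s S) = card (arc_occurrences X s T)"
  by (intro antisym card_arc_occurrences_le) auto

lemma sum_card_arc_positions:
  assumes X: "finite X" and F: "F \<subseteq> Pow X"
  shows "(\<Sum>xs\<in>permutations_of_set X. card (arc_positions F s xs))
       = (\<Sum>S\<in>F. card (arc_occurrences X s S))"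
proof -
  let ?A = "SIGMA xs:permutations_of_set X. arc_positions F s xs"
  have "card ?A = (\<Sum>xs\<in>permutations_of_set X. card (arc_positions F s xs))"
    by (simp add: arc_positions_def)
  moreover have "?A = (\<Union>S\<in>F. arc_occurrences X s S)"
    unfolding arc_occurrences_def arc_positions_def by auto
  moreover have "finite F" using F X by (meson finite_Pow_iff finite_subset)
  then have "card (\<Union>S\<in>F. arc_occurrences X s S) = (\<Sum>S\<in>F. card (arc_occurrences X s S))"
    by (rule card_UN_disjoint) (use finite_arc_occurrences[OF X] in \<open>auto simp: arc_occurrences_def\<close>)
  ultimately show ?thesis by simp
qed

context
  fixes X :: "'a set" and s :: nat
  assumes X: "finite X" "card X = 2*s+1" and s: "s \<ge> 1"
begin

lemma arc_positions_all_subsets: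
  assumes xs: "xs \<in> permutations_of_set X"
  shows "arc_positions {S. S \<subseteq> X \<and> card S = s} s xs = {..<2*s+1}"
proof -
  have len: "length xs = 2*s+1" using length_finite_permutations_of_set[OF xs] X(2) by simp
  then have "list_arc s xs j \<subseteq> X \<and> card (list_arc s xs j) = s" if "j < 2*s+1" for j
    using list_arc_permutation[OF xs, of s j] that by simp
  then show ?thesis unfolding arc_positions_def len by auto
qed

lemma sum_card_arc_positions_uniform:
  assumes F: "F \<subseteq> {S. S \<subseteq> X \<and> card S = s}" and S0: "S0 \<subseteq> X" "card S0 = s"
  shows "(\<Sum>xs\<in>permutations_of_set X. card (arc_positions F s xs))
       = card F * card (arc_occurrences X s S0)"
proof -
  have "(\<Sum>xs\<in>permutations_of_set X. card (arc_positions F s xs))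
      = (\<Sum>S\<in>F. card (arc_occurrences X s S))"
    using F by (intro sum_card_arc_positions[OF X(1)]) auto
  also have "\<dots> = (\<Sum>S\<in>F. card (arc_occurrences X s S0))"
  proof (rule sum.cong[OF refl])
    fix S assume "S \<in> F"
    then show "card (arc_occurrences X s S) = card (arc_occurrences X s S0)"
      using F S0 by (intro card_arc_occurrences_eq[OF X(1)]) auto
  qed
  finally show ?thesis by simp
qed

text \<open>The double count for the family of all \<open>s\<close>-subsets, which meets every cyclic order in
  all \<open>2s + 1\<close> arcs, combined with \<open>s C(2s + 1, s) = (2s + 1) C(2s, s - 1)\<close>.\<close>
lemma card_permutations_times_eq:
  assumes S0: "S0 \<subseteq> X" "card S0 = s"
  shows "card (permutations_of_set X) * s = ((2*s) choose (s-1)) * card (arc_occurrences X s S0)"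
proof -
  let ?K = "{S. S \<subseteq> X \<and> card S = s}" and ?c = "card (arc_occurrences X s S0)"
  have "card (permutations_of_set X) * (2*s+1) = card ?K * ?c"
    using sum_card_arc_positions_uniform[OF _ S0, of ?K] arc_positions_all_subsets by simp
  also have "card ?K = (2*s+1) choose s" using n_subsets[OF X(1), of s] X(2) by simp
  finally have "card (permutations_of_set X) * (2*s+1) * s = ((2*s+1) choose s) * ?c * s"
    by simp
  then have "(2*s+1) * (card (permutations_of_set X) * s) = (s * ((2*s+1) choose s)) * ?c"
    by (simp only: ac_simps)
  also have "s * ((2*s+1) choose s) = (2*s+1) * ((2*s) choose (s-1))"
    using binomial_absorption[of "s-1" "2*s+1"] s by simp
  finally have "(2*s+1) * (card (permutations_of_set X) * s) = (2*s+1) * (((2*s) choose (s-1)) * ?c)"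
    by (simp only: ac_simps)
  then show ?thesis by (simp only: mult_cancel1) simp
qed

context
  fixes F :: "'a set set"
  assumes F: "F \<subseteq> {S. S \<subseteq> X \<and> card S = s}" and I: "\<forall>A\<in>F. \<forall>B\<in>F. A \<inter> B \<noteq> {}"
begin

lemma card_arc_positions_permutation_le:
  assumes xs: "xs \<in> permutations_of_set X"
  shows "card (arc_positions F s xs) \<le> s"
  by (rule card_arc_positions_le[OF I permutations_of_setD(2)[OF xs]])
     (use length_finite_permutations_of_set[OF xs] X(2) in simp)

lemma sum_card_arc_positions_le:
  "(\<Sum>xs\<in>permutations_of_set X. card (arc_positions F s xs)) \<le> card (permutations_of_set X) * s"
  using sum_mono[OF card_arc_positions_permutation_le] by simp

theorem erdos_ko_rado_odd: "card F \<le> (2*s) choose (s-1)"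
proof -
  obtain S0 where S0: "S0 \<subseteq> X" "card S0 = s" using obtain_subset_with_card_n[of s X] X by auto
  let ?c = "card (arc_occurrences X s S0)"
  have "card F * ?c \<le> ((2*s) choose (s-1)) * ?c"
    using sum_card_arc_positions_le sum_card_arc_positions_uniform[OF F S0]
      card_permutations_times_eq[OF S0] by simp
  moreover have "0 < card (permutations_of_set X) * s" using card_permutations_of_set[OF X(1)] s by simp
  then have "?c > 0" unfolding card_permutations_times_eq[OF S0] by simp
  ultimately show ?thesis by simp
qed

lemma erdos_ko_rado_odd_equality_arcs:
  assumes eq: "card F = (2*s) choose (s-1)" and xs: "xs \<in> permutations_of_set X"
  shows "card (arc_positions F s xs) = s"
proof -
  obtain S0 where S0: "S0 \<subseteq> X" "card S0 = s" using obtain_subset_with_card_n[of s X] X by auto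
  have "(\<Sum>xs\<in>permutations_of_set X. card (arc_positions F s xs)) = card F * card (arc_occurrences X s S0)"
    by (rule sum_card_arc_positions_uniform[OF F S0])
  also have "\<dots> = card (permutations_of_set X) * s"
    unfolding eq card_permutations_times_eq[OF S0] ..
  also have "\<dots> = (\<Sum>xs\<in>permutations_of_set X. s)" by simp
  finally show ?thesis
    by (rule sum_mono_inv[OF _ card_arc_positions_permutation_le xs finite_permutations_of_set])
qed

end

end

section \<open>Uniqueness of the maximal intersecting families\<close>

lemma list_arc_rotate:
  assumes "j < length xs"
  shows "list_arc s (rotate r xs) j = list_arc s xs ((r + j) mod length xs)"
proof -
  let ?n = "length xs"
  have "arc ?n s j \<subseteq> {..<?n}" using assms by (intro arc_subset) auto
  then have "list_arc s (rotate r xs) j = (\<lambda>a. xs ! ((r + a) mod ?n)) ` arc ?n s j"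
    unfolding list_arc_def length_rotate by (intro image_cong refl) (auto simp: nth_rotate)
  also have "\<dots> = (\<lambda>i. xs ! ((r + (j + i) mod ?n) mod ?n)) ` {..<s}"
    unfolding arc_def by (simp add: image_image)
  also have "\<dots> = (\<lambda>i. xs ! (((r + j) mod ?n + i) mod ?n)) ` {..<s}"
    by (intro image_cong refl) (simp add: mod_simps add.assoc)
  also have "\<dots> = list_arc s xs ((r + j) mod ?n)"
    unfolding list_arc_def arc_def by (simp add: image_image)
  finally show ?thesis .
qed

lemma arcs_centred_rotate:
  assumes "arcs_centred F s xs x"
  shows "arcs_centred F s (rotate r xs) x"
  unfolding arcs_centred_def length_rotate
proof (intro allI impI)
  fix j assume j: "j < length xs"
  then have "(r + j) mod length xs < length xs" by (cases xs) auto
  then show "list_arc s (rotate r xs) j \<in> F \<longleftrightarrow> x \<in> list_arc s (rotate r xs) j"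
    using assms unfolding arcs_centred_def list_arc_rotate[OF j] by blast
qed

definition swap_next :: "nat \<Rightarrow> 'a list \<Rightarrow> 'a list" where
  "swap_next p xs = xs[p := xs ! Suc p, Suc p := xs ! p]"

lemma length_swap_next [simp]: "length (swap_next p xs) = length xs"
  unfolding swap_next_def by simp

lemma nth_swap_next:
  assumes "Suc p < length xs" "a < length xs"
  shows "swap_next p xs ! a = (if a = p then xs ! Suc p else if a = Suc p then xs ! p else xs ! a)"
  using assms unfolding swap_next_def by (auto simp: nth_list_update)

lemma swap_next_permutation:
  assumes "xs \<in> permutations_of_set X" "Suc p < length xs"
  shows "swap_next p xs \<in> permutations_of_set X"
  using permutations_of_setD[OF assms(1)] assms(2) unfolding swap_next_def
  by (auto simp: permutations_of_set_def distinct_list_update set_swap)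

lemma swap_next_append: "swap_next (length u) (u @ c # b # v) = u @ b # c # v"
  unfolding swap_next_def by (simp add: list_update_append nth_append)

lemma list_arc_swap_next:
  assumes "Suc p < length xs" "j < length xs"
    and eq: "p \<in> arc (length xs) s j \<longleftrightarrow> Suc p \<in> arc (length xs) s j"
  shows "list_arc s (swap_next p xs) j = list_arc s xs j"
proof -
  let ?A = "arc (length xs) s j"
  have A: "?A \<subseteq> {..<length xs}" using assms(2) by (intro arc_subset) auto
  have "swap_next p xs ! a \<in> list_arc s xs j" if "a \<in> ?A" for a
    using that A eq nth_swap_next[OF assms(1)] unfolding list_arc_def by (auto split: if_splits)
  moreover have "xs ! a \<in> list_arc s (swap_next p xs) j" if "a \<in> ?A" for a
  proof -
    have "a < length xs" using that A by auto
    then have "xs ! a = swap_next p xs ! (if a = p then Suc p else if a = Suc p then p else a)"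
      using nth_swap_next[OF assms(1)] assms(1) by auto
    moreover have "(if a = p then Suc p else if a = Suc p then p else a) \<in> ?A" using that eq by auto
    ultimately show ?thesis unfolding list_arc_def by auto
  qed
  ultimately show ?thesis unfolding list_arc_def length_swap_next by blast
qed

lemma ex_arc_separating_not_splitting:
  assumes s: "s \<ge> 1" and n: "n = 2*s+1" and r: "1 \<le> r" "r < n" and p: "1 \<le> p" "Suc p < n"
  shows "\<exists>j<n. (0 \<in> arc n s j \<longleftrightarrow> r \<notin> arc n s j) \<and> (p \<in> arc n s j \<longleftrightarrow> Suc p \<in> arc n s j)"
proof -
  have M: "a \<in> arc n s j \<longleftrightarrow> (if j \<le> a then a - j < s else a + n - j < s)" if "a < n" "j < n" for a j
    using mem_arc_iff[OF that] n by simp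
  have witness: "\<exists>j<n. (0 \<in> arc n s j \<longleftrightarrow> r \<notin> arc n s j) \<and> (p \<in> arc n s j \<longleftrightarrow> Suc p \<in> arc n s j)"
    if "j < n" "(if j \<le> 0 then 0 - j < s else 0 + n - j < s) \<longleftrightarrow> \<not> (if j \<le> r then r - j < s else r + n - j < s)"
      "(if j \<le> p then p - j < s else p + n - j < s) \<longleftrightarrow> (if j \<le> Suc p then Suc p - j < s else Suc p + n - j < s)"
    for j
    using that M[of 0 j] M[of r j] M[of p j] M[of "Suc p" j] r p n by auto
  consider "p \<noteq> s" "r \<le> s" | "p \<noteq> s" "s < r" | "p = s" "r \<le> s" "2 \<le> s" | "p = s" "s < r \<or> s < 2"
    by linarith
  then show ?thesis
  proof cases
    case 1 show ?thesis by (rule witness[of 1]) (use 1 r p n s in auto)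
  next
    case 2 show ?thesis by (rule witness[of "s+1"]) (use 2 r p n s in auto)
  next
    case 3 show ?thesis by (rule witness[of "s+2"]) (use 3 r p n s in auto)
  next
    case 4 show ?thesis by (rule witness[of 0]) (use 4 r p n s in auto)
  qed
qed

text \<open>An arc separating position 0 from the position of \<open>y\<close> without splitting the swapped pair
  belongs to both cyclic orders.\<close>
lemma arcs_centred_swap_next:
  assumes xs: "distinct xs" "length xs = 2*s+1" and s: "s \<ge> 1"
    and x: "xs ! 0 = x" "arcs_centred F s xs x" and p: "1 \<le> p" "Suc p < length xs"
    and y: "y \<in> set xs" "arcs_centred F s (swap_next p xs) y"
  shows "arcs_centred F s (swap_next p xs) x"
proof (cases "y = x")
  case True then show ?thesis using y by simp
next
  case False
  let ?n = "length xs"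
  obtain r where r: "r < ?n" "xs ! r = y" using y(1) by (metis in_set_conv_nth)
  have r1: "1 \<le> r" using r x False by (cases r) auto
  obtain j where j: "j < ?n" "0 \<in> arc ?n s j \<longleftrightarrow> r \<notin> arc ?n s j"
    "p \<in> arc ?n s j \<longleftrightarrow> Suc p \<in> arc ?n s j"
    using ex_arc_separating_not_splitting[OF s xs(2) r1 _ p] r by auto
  have A: "arc ?n s j \<subseteq> {..<?n}" using j(1) by (intro arc_subset) auto
  have "x \<in> list_arc s xs j \<longleftrightarrow> 0 \<in> arc ?n s j"
    unfolding list_arc_def using nth_mem_image_nth_iff[OF xs(1) _ A, of 0] x xs(2) by auto
  moreover have "y \<in> list_arc s xs j \<longleftrightarrow> r \<in> arc ?n s j"
    unfolding list_arc_def using nth_mem_image_nth_iff[OF xs(1) r(1) A] r by auto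
  moreover have "list_arc s xs j \<in> F \<longleftrightarrow> x \<in> list_arc s xs j"
    using x(2) j(1) unfolding arcs_centred_def by auto
  moreover have "list_arc s xs j \<in> F \<longleftrightarrow> y \<in> list_arc s xs j"
    using y(2) j(1) list_arc_swap_next[OF p(2) j(1) j(3)] unfolding arcs_centred_def by auto
  ultimately show ?thesis using j(2) by blast
qed

lemma swap_closed_move_to_front:
  assumes closed: "\<And>l p. Q l \<Longrightarrow> length pre \<le> p \<Longrightarrow> Suc p < length l \<Longrightarrow> Q (swap_next p l)"
  shows "Q (pre @ as @ b # bs) \<Longrightarrow> Q (pre @ b # as @ bs)"
proof (induction as arbitrary: bs rule: rev_induct)
  case Nil then show ?case by simp
next
  case (snoc c as)
  have "Q (swap_next (length (pre @ as)) ((pre @ as) @ c # b # bs))"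
    by (rule closed) (use snoc.prems in auto)
  then have "Q (pre @ as @ b # c # bs)" unfolding swap_next_append by simp
  then show ?case using snoc.IH by simp
qed

lemma swap_closed_mset:
  assumes closed: "\<And>l p. Q l \<Longrightarrow> k \<le> p \<Longrightarrow> Suc p < length l \<Longrightarrow> Q (swap_next p l)"
  shows "k \<le> length pre \<Longrightarrow> Q (pre @ as) \<Longrightarrow> mset as = mset bs \<Longrightarrow> Q (pre @ bs)"
proof (induction bs arbitrary: pre as)
  case Nil then show ?case by simp
next
  case (Cons b bs)
  have "b \<in> set as" using Cons.prems(3) by (metis list.set_intros(1) set_mset_mset)
  then obtain a1 a2 where as: "as = a1 @ b # a2" by (meson split_list)
  have "Q (pre @ b # a1 @ a2)"
    using swap_closed_move_to_front[where Q=Q and pre=pre] closed Cons.prems(1,2) as by fastforce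
  moreover have "mset (a1 @ a2) = mset bs" using Cons.prems(3) as by simp
  ultimately have "Q ((pre @ [b]) @ bs)" using Cons.IH[of "pre @ [b]" "a1 @ a2"] Cons.prems(1) by simp
  then show ?case by simp
qed

lemma card_subsets_containing:
  assumes "finite X" "t \<in> X" "s \<ge> 1"
  shows "card {S. S \<subseteq> X \<and> card S = s \<and> t \<in> S} = (card X - 1) choose (s - 1)"
proof -
  let ?T = "{T. T \<subseteq> X - {t} \<and> card T = s - 1}"
  have "{S. S \<subseteq> X \<and> card S = s \<and> t \<in> S} = insert t ` ?T"
  proof (intro equalityI subsetI)
    fix S assume S: "S \<in> {S. S \<subseteq> X \<and> card S = s \<and> t \<in> S}"
    then have "S - {t} \<in> ?T" "S = insert t (S - {t})" using assms by (auto simp: finite_subset)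
    then show "S \<in> insert t ` ?T" by blast
  next
    fix S assume "S \<in> insert t ` ?T"
    then obtain T where T: "T \<subseteq> X - {t}" "card T = s - 1" "S = insert t T" by auto
    moreover have "finite T" "t \<notin> T" using T(1) assms(1) finite_subset by auto
    ultimately have "card S = s" using assms(3) by (simp add: card_insert_disjoint)
    then show "S \<in> {S. S \<subseteq> X \<and> card S = s \<and> t \<in> S}" using T assms by auto
  qed
  moreover have "inj_on (insert t) ?T" by (rule inj_onI) auto
  ultimately have "card {S. S \<subseteq> X \<and> card S = s \<and> t \<in> S} = card ?T" by (simp add: card_image)
  also have "\<dots> = (card X - 1) choose (s - 1)" using n_subsets[of "X - {t}" "s-1"] assms by simp
  finally show ?thesis .
qed

context
  fixes X :: "'a set" and s :: nat and F :: "'a set set"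
  assumes X: "finite X" "card X = 2*s+1" and s: "s \<ge> 1"
    and F: "F \<subseteq> {S. S \<subseteq> X \<and> card S = s}" and I: "\<forall>A\<in>F. \<forall>B\<in>F. A \<inter> B \<noteq> {}"
    and eq: "card F = (2*s) choose (s-1)"
begin

lemma permutation_length: "xs \<in> permutations_of_set X \<Longrightarrow> length xs = 2*s+1"
  using length_finite_permutations_of_set[of xs X] X by simp

lemma permutation_centred:
  assumes xs: "xs \<in> permutations_of_set X"
  shows "\<exists>x\<in>X. arcs_centred F s xs x"
proof -
  have "card (arc_positions F s xs) = s" by (rule erdos_ko_rado_odd_equality_arcs[OF X s F I eq xs])
  then have "\<exists>x\<in>set xs. arcs_centred F s xs x"
    by (rule arc_positions_centred[OF I permutations_of_setD(2)[OF xs] permutation_length[OF xs] s])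
  then show ?thesis using permutations_of_setD(1)[OF xs] by simp
qed

lemma arcs_centred_head:
  assumes xs: "xs \<in> permutations_of_set X" "arcs_centred F s xs x" and ys: "x # ys \<in> permutations_of_set X"
  shows "arcs_centred F s (x # ys) x"
proof -
  \<comment> \<open>swaps behind position 0 preserve \<open>Q\<close> and generate all orders of the tail\<close>
  define Q where "Q l \<longleftrightarrow> l \<in> permutations_of_set X \<and> l ! 0 = x \<and> arcs_centred F s l x" for l
  have closed: "Q (swap_next p l)" if "Q l" "1 \<le> p" "Suc p < length l" for l p
  proof -
    have l: "l \<in> permutations_of_set X" "l ! 0 = x" "arcs_centred F s l x" using that Q_def by auto
    have sP: "swap_next p l \<in> permutations_of_set X" using swap_next_permutation l that by blast
    obtain y where "y \<in> X" "arcs_centred F s (swap_next p l) y" using permutation_centred[OF sP] by blast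
    then have "arcs_centred F s (swap_next p l) x"
      using arcs_centred_swap_next[OF _ _ s l(2,3) that(2,3)] permutations_of_setD[OF l(1)]
        permutation_length[OF l(1)] by auto
    moreover have "0 < length l" using that(3) by linarith
    then have "swap_next p l ! 0 = x" using nth_swap_next[OF that(3)] that(2) l(2) by simp
    ultimately show ?thesis using sP Q_def by auto
  qed
  have xX: "x \<in> set xs" using ys permutations_of_setD(1)[OF xs(1)] permutations_of_setD(1)[OF ys] by auto
  then obtain i where i: "i < length xs" "xs ! i = x" by (metis in_set_conv_nth)
  define as where "as = tl (rotate i xs)"
  have "rotate i xs ! 0 = x" using i nth_rotate[of 0 xs i] by (cases xs) auto
  then have as_def': "rotate i xs = x # as" unfolding as_def using i by (cases "rotate i xs") auto
  have "rotate i xs \<in> permutations_of_set X" using permutations_of_setD[OF xs(1)] by auto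
  then have "Q ([x] @ as)" using arcs_centred_rotate[OF xs(2), of i] unfolding Q_def as_def' by simp
  moreover have "mset as = mset ys"
    using permutations_of_setD[OF \<open>rotate i xs \<in> permutations_of_set X\<close>] permutations_of_setD[OF ys]
    unfolding as_def' by (subst set_eq_iff_mset_eq_distinct[symmetric]) auto
  ultimately have "Q ([x] @ ys)" using swap_closed_mset[of Q 1 "[x]" as ys, OF closed] by simp
  then show ?thesis unfolding Q_def by simp
qed

lemma list_arc_start: "length xs = 2*s+1 \<Longrightarrow> list_arc s xs 0 = set (take s xs)"
proof -
  assume len: "length xs = 2*s+1"
  have "arc (2*s+1) s 0 = {..<s}" unfolding arc_def by (auto simp: image_iff)
  then show ?thesis unfolding list_arc_def len using nth_image[of s xs] len by (simp add: lessThan_atLeast0)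
qed

lemma star_subset_family:
  assumes xs: "xs \<in> permutations_of_set X" "arcs_centred F s xs x"
    and S: "S \<subseteq> X" "card S = s" "x \<in> S"
  shows "S \<in> F"
proof -
  have finS: "finite S" using S(1) X(1) finite_subset by blast
  obtain ys where ys: "set ys = S - {x}" "distinct ys" using finite_distinct_list[of "S - {x}"] finS by auto
  obtain zs where zs: "set zs = X - S" "distinct zs" using finite_distinct_list[of "X - S"] X(1) by auto
  have len_ys: "length ys = s - 1" using ys S finS distinct_card by (metis card_Diff_singleton)
  have l: "x # ys @ zs \<in> permutations_of_set X" using ys zs S by (auto simp: permutations_of_set_def)
  have "arcs_centred F s (x # ys @ zs) x" by (rule arcs_centred_head[OF xs l])
  moreover have "list_arc s (x # ys @ zs) 0 = S"
    using list_arc_start[OF permutation_length[OF l]] len_ys s ys(1) S(3) by (cases s) auto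
  ultimately show ?thesis using S(3) permutation_length[OF l] unfolding arcs_centred_def by auto
qed

theorem erdos_ko_rado_odd_unique: "\<exists>t\<in>X. F = {S. S \<subseteq> X \<and> card S = s \<and> t \<in> S}"
proof -
  obtain xs where xs: "xs \<in> permutations_of_set X" using X(1) permutations_of_set_empty_iff by blast
  obtain x where x: "x \<in> X" "arcs_centred F s xs x" using permutation_centred[OF xs] by blast
  have "{S. S \<subseteq> X \<and> card S = s \<and> x \<in> S} = F"
  proof (rule card_subset_eq)
    have "F \<subseteq> Pow X" using F by auto
    then show "finite F" using X(1) finite_subset by blast
    show "{S. S \<subseteq> X \<and> card S = s \<and> x \<in> S} \<subseteq> F" using star_subset_family[OF xs x(2)] by auto
    show "card {S. S \<subseteq> X \<and> card S = s \<and> x \<in> S} = card F"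
      using card_subsets_containing[OF X(1) x(1) s] eq X(2) by simp
  qed
  then show ?thesis using x(1) by blast
qed

end

section \<open>Pairs and points linked to the \<open>(k - 2)\<close>-subsets of \<open>[n]\<close>\<close>

text \<open>A member \<open>S \<union> e\<close> (with \<open>e\<close> a pair of new points) is linked to \<open>S\<close>, and a member
  \<open>([n] - S) \<union> {y}\<close> (with \<open>y\<close> a new point) is linked to the complement \<open>S\<close> of its old part.\<close>
definition pair_links :: "nat \<Rightarrow> nat \<Rightarrow> nat set set \<Rightarrow> nat set \<Rightarrow> nat set set" where
  "pair_links m n F S = {e \<in> ksubsets {n+1..m} 2. S \<union> e \<in> F}"

definition point_links :: "nat \<Rightarrow> nat \<Rightarrow> nat set set \<Rightarrow> nat set \<Rightarrow> nat set" where
  "point_links m n F S = {y \<in> {n+1..m}. insert y ({1..n} - S) \<in> F}"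

definition link_weight :: "nat \<Rightarrow> nat \<Rightarrow> nat set set \<Rightarrow> nat set \<Rightarrow> nat" where
  "link_weight m n F S = card (pair_links m n F S) + card (point_links m n F S)"

lemma pair_links_subset: "pair_links m n F S \<subseteq> ksubsets {n+1..m} 2"
  unfolding pair_links_def by auto

lemma point_links_subset: "point_links m n F S \<subseteq> {n+1..m}"
  unfolding point_links_def by auto

lemma card_pairs_new: "card (ksubsets {n+1..m} 2) = (m - n) choose 2"
  unfolding ksubsets_def using n_subsets[of "{n+1..m}" 2] by simp

lemma old_new_split:
  assumes "G \<subseteq> {1..m::nat}"
  shows "G = (G \<inter> {1..n}) \<union> (G \<inter> {n+1..m})"
    and "card G = card (G \<inter> {1..n}) + card (G \<inter> {n+1..m})"
proof -
  show G: "G = (G \<inter> {1..n}) \<union> (G \<inter> {n+1..m})" using assms by (force simp: subset_iff)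
  have "finite G" using assms finite_subset by blast
  then show "card G = card (G \<inter> {1..n}) + card (G \<inter> {n+1..m})"
    by (subst G, subst card_Un_disjoint) auto
qed

lemma old_union_new:
  assumes "S \<subseteq> {1..n}" "e \<subseteq> {n+1..m::nat}"
  shows "(S \<union> e) \<inter> {1..n} = S" "(S \<union> e) \<inter> {n+1..m} = e" "S \<inter> e = {}"
  using assms by (fastforce simp: subset_iff)+

lemma old_union_new_eq_iff:
  assumes "S \<subseteq> {1..n}" "e \<subseteq> {n+1..m::nat}" "S' \<subseteq> {1..n}" "e' \<subseteq> {n+1..m}"
  shows "S \<union> e = S' \<union> e' \<longleftrightarrow> S = S' \<and> e = e'"
  using old_union_new(1,2)[OF assms(1,2)] old_union_new(1,2)[OF assms(3,4)] by metis

lemma insert_new_diff_eq_iff: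
  assumes "S \<subseteq> {1..n}" "y \<in> {n+1..m::nat}" "S' \<subseteq> {1..n}" "y' \<in> {n+1..m}"
  shows "insert y ({1..n} - S) = insert y' ({1..n} - S') \<longleftrightarrow> S = S' \<and> y = y'"
proof -
  have "insert y ({1..n} - S) = insert y' ({1..n} - S') \<longleftrightarrow> {1..n} - S = {1..n} - S' \<and> {y} = {y'}"
    using old_union_new_eq_iff[of "{1..n} - S" n "{y}" m "{1..n} - S'" "{y'}"] assms(2,4) by auto
  moreover have "{1..n} - S = {1..n} - S' \<longleftrightarrow> S = S'" using assms(1,3) by auto
  ultimately show ?thesis by simp
qed

lemma finite_mnk_intersecting: "mnk_intersecting m n k F \<Longrightarrow> finite F"
  unfolding mnk_intersecting_def ksubsets_def by (rule finite_subset[of _ "Pow {1..m}"]) auto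

lemma mnk_intersecting_member:
  "mnk_intersecting m n k F \<Longrightarrow> G \<in> F \<Longrightarrow> G \<subseteq> {1..m} \<and> card G = k"
  unfolding mnk_intersecting_def ksubsets_def by auto

lemma mult_diff_add_mult:
  fixes p M c K :: nat
  assumes "c \<le> K" "p \<le> M"
  shows "p * (K - c) + M * c = p * K + (M - p) * c"
proof -
  obtain e where "K = c + e" using le_Suc_ex[OF assms(1)] by blast
  moreover obtain d where "M = p + d" using le_Suc_ex[OF assms(2)] by blast
  ultimately show ?thesis by (simp add: algebra_simps)
qed

locale mnk_2k_minus_3 =
  fixes k m n :: nat
  assumes k: "k \<ge> 3" and m: "m > 2*k" and n: "n = 2*k - 3"
begin

lemma n_odd: "n = 2*(k-2) + 1" using k n by linarith

lemma n_less_m: "n < m" using k n m by linarith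

lemma four_le_new: "4 \<le> m - n" using k n m by linarith

lemma card_new_le_two:
  assumes F: "mnk_intersecting m n k F" and G: "G \<in> F"
  shows "card (G \<inter> {n+1..m}) \<le> 2"
proof (rule ccontr)
  assume many: "\<not> ?thesis"
  have G': "G \<subseteq> {1..m}" "card G = k" using mnk_intersecting_member[OF F G] by auto
  have "{1..n} - G = {1..n} - (G \<inter> {1..n})" by auto
  then have "card ({1..n} - G) = n - card (G \<inter> {1..n})" by (simp add: card_Diff_subset)
  then have "card ({1..n} - G) \<ge> k" using old_new_split(2)[OF G'(1), of n] G'(2) many n k by linarith
  then obtain K where K: "K \<subseteq> {1..n} - G" "card K = k" by (meson obtain_subset_with_card_n)
  then have "K \<in> F" using F unfolding mnk_intersecting_def ksubsets_def by auto
  then show False using F G K unfolding mnk_intersecting_def intersecting_def by blast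
qed

lemma member_two_new:
  assumes F: "mnk_intersecting m n k F" and G: "G \<in> F" and two: "card (G \<inter> {n+1..m}) = 2"
  shows "G \<inter> {1..n} \<in> ksubsets {1..n} (k-2)" "G \<inter> {n+1..m} \<in> pair_links m n F (G \<inter> {1..n})"
proof -
  have G': "G \<subseteq> {1..m}" "card G = k" using mnk_intersecting_member[OF F G] by auto
  then show "G \<inter> {1..n} \<in> ksubsets {1..n} (k-2)"
    using old_new_split(2)[OF G'(1), of n] two unfolding ksubsets_def by auto
  show "G \<inter> {n+1..m} \<in> pair_links m n F (G \<inter> {1..n})"
    using old_new_split(1)[OF G'(1), of n] G two unfolding pair_links_def ksubsets_def by auto
qed

lemma member_one_new:
  assumes F: "mnk_intersecting m n k F" and G: "G \<in> F" and one: "G \<inter> {n+1..m} = {y}"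
  shows "{1..n} - G \<in> ksubsets {1..n} (k-2)" "y \<in> point_links m n F ({1..n} - G)"
    and "insert y ({1..n} - ({1..n} - G)) = G"
proof -
  have G': "G \<subseteq> {1..m}" "card G = k" using mnk_intersecting_member[OF F G] by auto
  have "card (G \<inter> {1..n}) = k - 1" using old_new_split(2)[OF G'(1), of n] G'(2) one by simp
  moreover have "{1..n} - G = {1..n} - (G \<inter> {1..n})" by auto
  ultimately have "card ({1..n} - G) = n - (k - 1)" by (simp add: card_Diff_subset)
  then show "{1..n} - G \<in> ksubsets {1..n} (k-2)" using n k unfolding ksubsets_def by auto
  show G_eq: "insert y ({1..n} - ({1..n} - G)) = G" using old_new_split(1)[OF G'(1), of n] one by auto
  show "y \<in> point_links m n F ({1..n} - G)" using G G_eq one unfolding point_links_def by auto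
qed

lemma card_members_two_new:
  assumes F: "mnk_intersecting m n k F"
  shows "card {G\<in>F. card (G \<inter> {n+1..m}) = 2} = (\<Sum>S\<in>ksubsets {1..n} (k-2). card (pair_links m n F S))"
proof -
  let ?K = "ksubsets {1..n} (k-2)"
  have "bij_betw (\<lambda>(S, e). S \<union> e) (SIGMA S:?K. pair_links m n F S) {G\<in>F. card (G \<inter> {n+1..m}) = 2}"
    (is "bij_betw _ ?A _")
  proof (rule bij_betw_imageI)
    show "inj_on (\<lambda>(S, e). S \<union> e) (SIGMA S:?K. pair_links m n F S)"
      by (rule inj_onI) (auto simp: pair_links_def ksubsets_def old_union_new_eq_iff)
    show "(\<lambda>(S, e). S \<union> e) ` (SIGMA S:?K. pair_links m n F S) = {G\<in>F. card (G \<inter> {n+1..m}) = 2}"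
    proof (intro equalityI subsetI)
      fix G assume "G \<in> (\<lambda>(S, e). S \<union> e) ` (SIGMA S:?K. pair_links m n F S)"
      then obtain S e where "S \<in> ?K" "e \<in> pair_links m n F S" "G = S \<union> e" by auto
      then show "G \<in> {G\<in>F. card (G \<inter> {n+1..m}) = 2}"
        using old_union_new(2)[of S n e m] unfolding pair_links_def ksubsets_def by auto
    next
      fix G assume "G \<in> {G\<in>F. card (G \<inter> {n+1..m}) = 2}"
      then have G: "G \<in> F" "card (G \<inter> {n+1..m}) = 2" by auto
      have "G = (\<lambda>(S, e). S \<union> e) (G \<inter> {1..n}, G \<inter> {n+1..m})"
        using old_new_split(1) mnk_intersecting_member[OF F G(1)] by auto
      then show "G \<in> (\<lambda>(S, e). S \<union> e) ` (SIGMA S:?K. pair_links m n F S)"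
        using member_two_new[OF F G] by blast
    qed
  qed
  then have "card {G\<in>F. card (G \<inter> {n+1..m}) = 2} = card ?A" by (simp add: bij_betw_same_card)
  also have "\<dots> = (\<Sum>S\<in>?K. card (pair_links m n F S))"
  proof (rule card_SigmaI)
    show "finite ?K" unfolding ksubsets_def by (rule finite_subsets_with) simp
    show "\<forall>S\<in>?K. finite (pair_links m n F S)"
      unfolding pair_links_def ksubsets_def by (auto intro: finite_subsets_with)
  qed
  finally show ?thesis .
qed

lemma card_members_one_new:
  assumes F: "mnk_intersecting m n k F"
  shows "card {G\<in>F. card (G \<inter> {n+1..m}) = 1} = (\<Sum>S\<in>ksubsets {1..n} (k-2). card (point_links m n F S))"
proof -
  let ?K = "ksubsets {1..n} (k-2)"
  have "bij_betw (\<lambda>(S, y). insert y ({1..n} - S)) (SIGMA S:?K. point_links m n F S)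
      {G\<in>F. card (G \<inter> {n+1..m}) = 1}" (is "bij_betw ?f ?A _")
  proof (rule bij_betw_imageI)
    show "inj_on ?f ?A"
    proof (rule inj_onI)
      fix u v assume uv: "u \<in> ?A" "v \<in> ?A" "?f u = ?f v"
      obtain S y S' y' where u: "u = (S, y)" and v: "v = (S', y')" by (cases u, cases v)
      have mem: "S \<subseteq> {1..n}" "y \<in> {n+1..m}" "S' \<subseteq> {1..n}" "y' \<in> {n+1..m}"
        using uv(1,2) u v unfolding ksubsets_def point_links_def by auto
      show "u = v" using insert_new_diff_eq_iff[OF mem] uv(3) u v by simp
    qed
    show "?f ` ?A = {G\<in>F. card (G \<inter> {n+1..m}) = 1}"
    proof (intro equalityI subsetI)
      fix G assume "G \<in> ?f ` ?A"
      then obtain S y where "y \<in> point_links m n F S" "G = insert y ({1..n} - S)" by auto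
      then show "G \<in> {G\<in>F. card (G \<inter> {n+1..m}) = 1}" unfolding point_links_def by auto
    next
      fix G assume "G \<in> {G\<in>F. card (G \<inter> {n+1..m}) = 1}"
      then have GF: "G \<in> F" and one: "card (G \<inter> {n+1..m}) = 1" by auto
      from one obtain y where "G \<inter> {n+1..m} = {y}" by (rule card_1_singletonE)
      note G = GF this
      have "({1..n} - G, y) \<in> ?A" using member_one_new(1,2)[OF F G] by simp
      moreover have "G = ?f ({1..n} - G, y)" using member_one_new(3)[OF F G] by simp
      ultimately show "G \<in> ?f ` ?A" by (rule rev_image_eqI)
    qed
  qed
  then have "card {G\<in>F. card (G \<inter> {n+1..m}) = 1} = card ?A" by (simp add: bij_betw_same_card)
  also have "\<dots> = (\<Sum>S\<in>?K. card (point_links m n F S))"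
  proof (rule card_SigmaI)
    show "finite ?K" unfolding ksubsets_def by (rule finite_subsets_with) simp
    show "\<forall>S\<in>?K. finite (point_links m n F S)" unfolding point_links_def by simp
  qed
  finally show ?thesis .
qed

lemma members_no_new:
  assumes F: "mnk_intersecting m n k F"
  shows "{G\<in>F. card (G \<inter> {n+1..m}) = 0} = ksubsets {1..n} k"
proof (intro equalityI subsetI)
  fix G assume "G \<in> {G\<in>F. card (G \<inter> {n+1..m}) = 0}"
  then have G: "G \<in> F" "G \<inter> {n+1..m} = {}" by auto
  have "G \<subseteq> {1..m}" "card G = k" using mnk_intersecting_member[OF F G(1)] by auto
  then show "G \<in> ksubsets {1..n} k" using G(2) unfolding ksubsets_def by (force simp: subset_iff)
next
  fix G assume "G \<in> ksubsets {1..n} k"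
  then show "G \<in> {G\<in>F. card (G \<inter> {n+1..m}) = 0}"
    using F unfolding mnk_intersecting_def ksubsets_def by auto
qed

text \<open>Every member outside \<open>[n]\<close> has one or two new points (by \<open>card_new_le_two\<close>) and is
  recorded exactly once among the links of a \<open>(k-2)\<close>-subset of \<open>[n]\<close>.\<close>
lemma card_eq_sum_link_weight:
  assumes F: "mnk_intersecting m n k F"
  shows "card F = (n choose k) + (\<Sum>S\<in>ksubsets {1..n} (k-2). link_weight m n F S)"
proof -
  let ?F = "\<lambda>i. {G\<in>F. card (G \<inter> {n+1..m}) = i}"
  have fin: "finite F" by (rule finite_mnk_intersecting[OF F])
  have part: "F = ?F 0 \<union> ?F 1 \<union> ?F 2"
  proof (intro equalityI subsetI)
    fix G assume G: "G \<in> F"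
    then have "card (G \<inter> {n+1..m}) \<le> 2" by (rule card_new_le_two[OF F])
    then consider "card (G \<inter> {n+1..m}) = 0" | "card (G \<inter> {n+1..m}) = 1" | "card (G \<inter> {n+1..m}) = 2"
      by linarith
    then show "G \<in> ?F 0 \<union> ?F 1 \<union> ?F 2" using G by cases blast+
  qed auto
  have "card F = card (?F 0 \<union> ?F 1 \<union> ?F 2)" using arg_cong[where f=card, OF part] .
  also have "\<dots> = card (?F 0 \<union> ?F 1) + card (?F 2)" by (rule card_Un_disjoint) (use fin in auto)
  also have "card (?F 0 \<union> ?F 1) = card (?F 0) + card (?F 1)" by (rule card_Un_disjoint) (use fin in auto)
  also have "card (?F 0) = n choose k"
    unfolding members_no_new[OF F] ksubsets_def using n_subsets[of "{1..n}" k] by simp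
  also note card_members_one_new[OF F]
  also note card_members_two_new[OF F]
  finally show ?thesis unfolding link_weight_def sum.distrib by simp
qed

lemma point_link_mem_pair_link:
  assumes F: "mnk_intersecting m n k F" and S: "S \<subseteq> {1..n}"
    and e: "e \<in> pair_links m n F S" and y: "y \<in> point_links m n F S"
  shows "y \<in> e"
proof -
  have "S \<union> e \<in> F" "insert y ({1..n} - S) \<in> F" "e \<subseteq> {n+1..m}" "y \<in> {n+1..m}"
    using e y unfolding pair_links_def point_links_def ksubsets_def by auto
  then have "(S \<union> e) \<inter> insert y ({1..n} - S) \<noteq> {}"
    using F unfolding mnk_intersecting_def intersecting_def by blast
  moreover have "e \<inter> ({1..n} - S) = {}" using \<open>e \<subseteq> {n+1..m}\<close> by auto
  moreover have "y \<notin> S" using S \<open>y \<in> {n+1..m}\<close> by auto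
  ultimately show ?thesis by auto
qed

lemma card_pair_links_le:
  assumes F: "mnk_intersecting m n k F" and S: "S \<subseteq> {1..n}" and y: "y \<in> point_links m n F S"
  shows "card (pair_links m n F S) \<le> m - n - 1"
proof -
  have "pair_links m n F S \<subseteq> {e. e \<subseteq> {n+1..m} \<and> card e = 2 \<and> y \<in> e}"
    using point_link_mem_pair_link[OF F S _ y] unfolding pair_links_def ksubsets_def by auto
  then have "card (pair_links m n F S) \<le> card {e. e \<subseteq> {n+1..m} \<and> card e = 2 \<and> y \<in> e}"
    by (rule card_mono[rotated]) (rule finite_subsets_with, simp)
  also have "\<dots> \<le> m - n - 1"
    using card_pairs_containing_le[of "{n+1..m}" y] point_links_subset[of m n F S] y by auto
  finally show ?thesis .
qed

text \<open>Linked points lie in every linked pair: so either at most one point is linked, and then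
  \<open>card_pair_links_le\<close> applies, or two points are, and they form the only linked pair.\<close>
lemma link_weight_le_or_pairs_only:
  assumes F: "mnk_intersecting m n k F" and S: "S \<subseteq> {1..n}"
  shows "link_weight m n F S \<le> m - n \<or>
    (point_links m n F S = {} \<and> card (pair_links m n F S) > m - n)"
proof (cases "point_links m n F S = {} \<or> pair_links m n F S = {}")
  case True
  moreover have "card (point_links m n F S) \<le> m - n" using card_mono[OF _ point_links_subset] by simp
  ultimately show ?thesis unfolding link_weight_def by auto
next
  case False
  then obtain y e0 where y: "y \<in> point_links m n F S" and e0: "e0 \<in> pair_links m n F S" by blast
  have ce0: "card e0 = 2" "finite e0" using e0 unfolding pair_links_def ksubsets_def by (auto intro: card_ge_0_finite)
  have Ze0: "point_links m n F S \<subseteq> e0" using point_link_mem_pair_link[OF F S e0] by auto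
  have cE: "card (pair_links m n F S) \<le> m - n - 1" by (rule card_pair_links_le[OF F S y])
  have "card (point_links m n F S) \<le> 2" using card_mono[OF ce0(2) Ze0] ce0(1) by simp
  then consider "card (point_links m n F S) \<le> 1" | "card (point_links m n F S) = 2" by linarith
  then show ?thesis
  proof cases
    case 1
    then show ?thesis using cE four_le_new unfolding link_weight_def by linarith
  next
    case 2
    then have Z: "point_links m n F S = e0" using card_subset_eq[OF ce0(2) Ze0] ce0(1) by simp
    have "pair_links m n F S \<subseteq> {e0}"
    proof
      fix e assume e: "e \<in> pair_links m n F S"
      then have "e0 \<subseteq> e" "card e = 2" "finite e"
        using point_link_mem_pair_link[OF F S e] Z unfolding pair_links_def ksubsets_def
        by (auto intro: card_ge_0_finite)
      then have "e0 = e" using card_subset_eq[of e e0] ce0(1) by simp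
      then show "e \<in> {e0}" by simp
    qed
    then have "card (pair_links m n F S) \<le> card {e0}" by (rule card_mono[rotated]) simp
    then show ?thesis using 2 four_le_new unfolding link_weight_def by simp
  qed
qed

lemma new_less_pairs: "m - n < (m - n) choose 2"
proof -
  have "(m - n) * 3 \<le> (m - n) * (m - n - 1)" using four_le_new by (intro mult_le_mono2) linarith
  then have "2 * (m - n) + 2 \<le> (m - n) * (m - n - 1)" using four_le_new by linarith
  then show ?thesis by (simp add: choose_two)
qed

lemma link_weight_le_pairs:
  assumes F: "mnk_intersecting m n k F" and S: "S \<subseteq> {1..n}"
  shows "link_weight m n F S \<le> (m - n) choose 2"
proof -
  have "card (pair_links m n F S) \<le> card (ksubsets {n+1..m} 2)"
    by (rule card_mono[OF _ pair_links_subset]) (simp add: ksubsets_def finite_subsets_with)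
  then have "card (pair_links m n F S) \<le> (m - n) choose 2" by (simp only: card_pairs_new)
  then show ?thesis
    using link_weight_le_or_pairs_only[OF F S] new_less_pairs unfolding link_weight_def by auto
qed

lemma heavy_links_intersect:
  assumes F: "mnk_intersecting m n k F" and S: "S \<subseteq> {1..n}" and T: "T \<subseteq> {1..n}"
    and heavy: "link_weight m n F S > m - n" "link_weight m n F T > m - n"
  shows "S \<inter> T \<noteq> {}"
proof
  assume d: "S \<inter> T = {}"
  have big: "card (pair_links m n F S) > m - n"
    using link_weight_le_or_pairs_only[OF F S] heavy(1) by linarith
  have "\<forall>e\<in>pair_links m n F S. \<forall>f\<in>pair_links m n F T. e \<inter> f \<noteq> {}"
  proof (intro ballI)
    fix e f assume e: "e \<in> pair_links m n F S" and f: "f \<in> pair_links m n F T"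
    have h: "S \<union> e \<in> F" "T \<union> f \<in> F" "e \<subseteq> {n+1..m}" "f \<subseteq> {n+1..m}"
      using e f unfolding pair_links_def ksubsets_def by auto
    then have "(S \<union> e) \<inter> (T \<union> f) \<noteq> {}"
      using F unfolding mnk_intersecting_def intersecting_def by blast
    moreover have "S \<inter> f = {}" "e \<inter> T = {}" using old_union_new(3)[OF S h(4)] old_union_new(3)[OF T h(3)] by auto
    ultimately show "e \<inter> f \<noteq> {}" using d by auto
  qed
  then have "card (pair_links m n F T) \<le> card {n+1..m}"
    using cross_intersecting_pairs_small[of "{n+1..m}" "pair_links m n F S" "pair_links m n F T"]
      four_le_new big pair_links_subset[of m n F S] pair_links_subset[of m n F T]
    unfolding ksubsets_def by simp
  then show False using link_weight_le_or_pairs_only[OF F T] heavy(2) by simp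
qed

lemma h_eq: "h m n k = (n choose k) + ((2*(k-2)) choose (k-2)) * (m - n)
    + ((2*(k-2)) choose (k-2-1)) * ((m - n) choose 2)"
proof -
  have "2*k - n - 1 = 2" using k n by linarith
  then have "{1..2*k-n-1} = {1, 2}" by auto
  then have "h m n k = (n choose k) + ((n-1) choose (k-1-1)) * ((m-n) choose 1)
      + ((n-1) choose (k-2-1)) * ((m-n) choose 2)"
    unfolding h_def by simp
  moreover have "n - 1 = 2*(k-2)" using k n by linarith
  ultimately show ?thesis by (simp add: diff_diff_left numeral_2_eq_2)
qed

definition heavy :: "nat set set \<Rightarrow> nat set set" where
  "heavy F = {S \<in> ksubsets {1..n} (k-2). link_weight m n F S > m - n}"

definition weight_cap :: "nat set set \<Rightarrow> nat set \<Rightarrow> nat" where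
  "weight_cap F S = (if S \<in> heavy F then (m - n) choose 2 else m - n)"

lemma finite_old_subsets: "finite (ksubsets {1..n} (k-2))"
  unfolding ksubsets_def by (rule finite_subsets_with) simp

lemma card_old_subsets: "card (ksubsets {1..n} (k-2)) = ((2*(k-2)) choose (k-2-1)) + ((2*(k-2)) choose (k-2))"
proof -
  obtain t where t: "k - 2 = Suc t" using k by (cases "k - 2") auto
  have "card (ksubsets {1..n} (k-2)) = Suc (2*(k-2)) choose Suc t"
    unfolding ksubsets_def using n_subsets[of "{1..n}" "k-2"] n_odd t by simp
  then show ?thesis using t by simp
qed

lemma card_heavy_le:
  assumes F: "mnk_intersecting m n k F"
  shows "card (heavy F) \<le> (2*(k-2)) choose (k-2-1)"
proof (rule erdos_ko_rado_odd)
  show "finite {1..n}" "card {1..n} = 2*(k-2)+1" "1 \<le> k-2" using n_odd k by auto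
  show "heavy F \<subseteq> {S. S \<subseteq> {1..n} \<and> card S = k-2}" unfolding heavy_def ksubsets_def by auto
  show "\<forall>A\<in>heavy F. \<forall>B\<in>heavy F. A \<inter> B \<noteq> {}"
    using heavy_links_intersect[OF F] unfolding heavy_def ksubsets_def by auto
qed

lemma link_weight_le_cap:
  assumes F: "mnk_intersecting m n k F" and S: "S \<in> ksubsets {1..n} (k-2)"
  shows "link_weight m n F S \<le> weight_cap F S"
  using link_weight_le_pairs[OF F] S unfolding weight_cap_def heavy_def ksubsets_def by auto

lemma sum_weight_cap:
  "(\<Sum>S\<in>ksubsets {1..n} (k-2). weight_cap F S)
     = (m - n) * card (ksubsets {1..n} (k-2)) + (((m - n) choose 2) - (m - n)) * card (heavy F)"
proof -
  let ?K = "ksubsets {1..n} (k-2)" and ?M = "(m - n) choose 2"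
  have sub: "heavy F \<subseteq> ?K" unfolding heavy_def by auto
  then have le: "card (heavy F) \<le> card ?K" by (rule card_mono[OF finite_old_subsets])
  have "(\<Sum>S\<in>?K. weight_cap F S) = (\<Sum>S\<in>?K - heavy F. weight_cap F S) + (\<Sum>S\<in>heavy F. weight_cap F S)"
    by (rule sum.subset_diff[OF sub finite_old_subsets])
  also have "\<dots> = (\<Sum>S\<in>?K - heavy F. m - n) + (\<Sum>S\<in>heavy F. ?M)"
    by (intro arg_cong2[where f="(+)"] sum.cong) (auto simp: weight_cap_def)
  also have "\<dots> = (m - n) * (card ?K - card (heavy F)) + ?M * card (heavy F)"
    using card_Diff_subset[OF finite_subset[OF sub finite_old_subsets] sub] by simp
  also have "\<dots> = (m - n) * card ?K + (?M - (m - n)) * card (heavy F)"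
    using mult_diff_add_mult[OF le less_imp_le[OF new_less_pairs]] .
  finally show ?thesis .
qed

lemma h_eq_caps:
  "h m n k = (n choose k) + (m - n) * card (ksubsets {1..n} (k-2))
     + (((m - n) choose 2) - (m - n)) * ((2*(k-2)) choose (k-2-1))"
proof -
  obtain d where d: "(m - n) choose 2 = (m - n) + d" using le_Suc_ex[OF less_imp_le[OF new_less_pairs]] by blast
  show ?thesis unfolding h_eq card_old_subsets d by (simp add: algebra_simps)
qed

theorem card_le_h:
  assumes F: "mnk_intersecting m n k F"
  shows "card F \<le> h m n k"
proof -
  have "(\<Sum>S\<in>ksubsets {1..n} (k-2). link_weight m n F S) \<le> (\<Sum>S\<in>ksubsets {1..n} (k-2). weight_cap F S)"
    by (rule sum_mono) (rule link_weight_le_cap[OF F])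
  then have "card F \<le> (n choose k) + (\<Sum>S\<in>ksubsets {1..n} (k-2). weight_cap F S)"
    unfolding card_eq_sum_link_weight[OF F] by simp
  also have "\<dots> \<le> h m n k"
    unfolding sum_weight_cap h_eq_caps using card_heavy_le[OF F] by simp
  finally show ?thesis .
qed

lemma card_eq_h_caps:
  assumes F: "mnk_intersecting m n k F" and eq: "card F = h m n k"
  shows "card (heavy F) = (2*(k-2)) choose (k-2-1)"
    and "\<And>S. S \<in> ksubsets {1..n} (k-2) \<Longrightarrow> link_weight m n F S = weight_cap F S"
proof -
  let ?K = "ksubsets {1..n} (k-2)" and ?d = "((m - n) choose 2) - (m - n)"
  have le: "(\<Sum>S\<in>?K. link_weight m n F S) \<le> (\<Sum>S\<in>?K. weight_cap F S)"
    by (rule sum_mono) (rule link_weight_le_cap[OF F])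
  have "?d * ((2*(k-2)) choose (k-2-1)) \<le> ?d * card (heavy F)"
    using eq le unfolding card_eq_sum_link_weight[OF F] sum_weight_cap h_eq_caps by linarith
  moreover have "?d > 0" using new_less_pairs by simp
  ultimately show heavy: "card (heavy F) = (2*(k-2)) choose (k-2-1)" using card_heavy_le[OF F] by simp
  have sums: "(\<Sum>S\<in>?K. link_weight m n F S) = (\<Sum>S\<in>?K. weight_cap F S)"
    using eq le unfolding card_eq_sum_link_weight[OF F] sum_weight_cap h_eq_caps heavy by linarith
  show "link_weight m n F S = weight_cap F S" if "S \<in> ?K" for S
  proof (rule sum_mono_inv[OF sums _ that finite_old_subsets])
    fix T assume "T \<in> ?K"
    then show "link_weight m n F T \<le> weight_cap F T" by (rule link_weight_le_cap[OF F])
  qed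
qed

lemma heavy_star:
  assumes F: "mnk_intersecting m n k F" and eq: "card F = h m n k"
  shows "\<exists>t\<in>{1..n}. heavy F = {S. S \<subseteq> {1..n} \<and> card S = k-2 \<and> t \<in> S}"
proof (rule erdos_ko_rado_odd_unique)
  show "finite {1..n}" "card {1..n} = 2*(k-2)+1" "1 \<le> k-2" using n_odd k by auto
  show "heavy F \<subseteq> {S. S \<subseteq> {1..n} \<and> card S = k-2}" unfolding heavy_def ksubsets_def by auto
  show "\<forall>A\<in>heavy F. \<forall>B\<in>heavy F. A \<inter> B \<noteq> {}"
    using heavy_links_intersect[OF F] unfolding heavy_def ksubsets_def by auto
  show "card (heavy F) = (2*(k-2)) choose (k-2-1)" by (rule card_eq_h_caps(1)[OF F eq])
qed

lemma heavy_links: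
  assumes F: "mnk_intersecting m n k F" and eq: "card F = h m n k" and S: "S \<in> heavy F"
  shows "pair_links m n F S = ksubsets {n+1..m} 2" "point_links m n F S = {}"
proof -
  have SK: "S \<in> ksubsets {1..n} (k-2)" "link_weight m n F S > m - n" using S unfolding heavy_def by auto
  then have w: "link_weight m n F S = (m - n) choose 2"
    using card_eq_h_caps(2)[OF F eq] S unfolding weight_cap_def by simp
  have "S \<subseteq> {1..n}" using SK(1) unfolding ksubsets_def by auto
  then have "link_weight m n F S \<le> m - n \<or> point_links m n F S = {} \<and> card (pair_links m n F S) > m - n"
    by (rule link_weight_le_or_pairs_only[OF F])
  then show Z: "point_links m n F S = {}" using SK(2) by (meson not_le)
  have "card (pair_links m n F S) = card (ksubsets {n+1..m} 2)"
    using w Z card_pairs_new unfolding link_weight_def by simp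
  then show "pair_links m n F S = ksubsets {n+1..m} 2"
    by (intro card_subset_eq pair_links_subset) (simp add: ksubsets_def finite_subsets_with)
qed

text \<open>A pair linked to \<open>S\<close> would be disjoint from \<open>T \<union> f\<close>, where \<open>T\<close> is a heavy set
  avoiding \<open>S\<close> (it exists as \<open>S\<close> misses the centre \<open>t\<close>) and \<open>f\<close> any pair avoiding it.\<close>
lemma pair_links_off_centre:
  assumes F: "mnk_intersecting m n k F" and t: "t \<in> {1..n}"
    and full: "\<And>T. T \<in> ksubsets {1..n} (k-2) \<Longrightarrow> t \<in> T \<Longrightarrow> pair_links m n F T = ksubsets {n+1..m} 2"
    and S: "S \<in> ksubsets {1..n} (k-2)" "t \<notin> S"
  shows "pair_links m n F S = {}"
proof (rule ccontr)
  assume "pair_links m n F S \<noteq> {}"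
  then obtain e where e: "S \<union> e \<in> F" "e \<subseteq> {n+1..m}" "card e = 2"
    unfolding pair_links_def ksubsets_def by auto
  have S': "S \<subseteq> {1..n}" "card S = k-2" "finite S" using S(1) finite_subset unfolding ksubsets_def by auto
  have "card ({1..n} - S) = k - 1" using card_Diff_subset[OF S'(3,1)] S'(2) n k by simp
  then have "card ({1..n} - S - {t}) = k - 2" using t S(2) by simp
  then have "card ({1..n} - S - {t}) > 0" using k by simp
  then have "{1..n} - S - {t} \<noteq> {}" using card_gt_0_iff by blast
  then obtain u where u: "u \<in> {1..n} - S - {t}" by blast
  define T where "T = {1..n} - S - {u}"
  have T: "T \<in> ksubsets {1..n} (k-2)" "t \<in> T" "S \<inter> T = {}"
    using \<open>card ({1..n} - S) = k - 1\<close> u t S(2) k unfolding T_def ksubsets_def by auto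
  have "card ({n+1..m} - e) \<ge> 2" using card_Diff_subset[OF _ e(2)] e(3) four_le_new by (simp add: card_ge_0_finite)
  then obtain f where f: "f \<subseteq> {n+1..m} - e" "card f = 2" by (meson obtain_subset_with_card_n)
  then have "f \<in> pair_links m n F T" using full[OF T(1,2)] unfolding ksubsets_def by auto
  then have "T \<union> f \<in> F" unfolding pair_links_def by auto
  moreover have "(S \<union> e) \<inter> (T \<union> f) = {}"
    using T(3) old_union_new(3)[OF S'(1), of f m] old_union_new(3)[of T n e m] T(1) e(2) f(1)
    unfolding ksubsets_def by auto
  ultimately show False using F e(1) unfolding mnk_intersecting_def intersecting_def by blast
qed

lemma links_at_equality:
  assumes F: "mnk_intersecting m n k F" and eq: "card F = h m n k"
  shows "\<exists>t\<in>{1..n}. \<forall>S\<in>ksubsets {1..n} (k-2).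
    pair_links m n F S = (if t \<in> S then ksubsets {n+1..m} 2 else {}) \<and>
    point_links m n F S = (if t \<in> S then {} else {n+1..m})"
proof -
  obtain t where t: "t \<in> {1..n}" and star: "heavy F = {S. S \<subseteq> {1..n} \<and> card S = k-2 \<and> t \<in> S}"
    using heavy_star[OF F eq] by blast
  have centre: "S \<in> heavy F" if "S \<in> ksubsets {1..n} (k-2)" "t \<in> S" for S
    using that star unfolding ksubsets_def by auto
  have off: "pair_links m n F S = {} \<and> point_links m n F S = {n+1..m}"
    if S: "S \<in> ksubsets {1..n} (k-2)" "t \<notin> S" for S
  proof
    show P: "pair_links m n F S = {}"
      using pair_links_off_centre[OF F t _ S] heavy_links(1)[OF F eq centre] by blast
    have "S \<notin> heavy F" using star S unfolding ksubsets_def by auto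
    then have "link_weight m n F S = m - n" using card_eq_h_caps(2)[OF F eq S(1)] unfolding weight_cap_def by simp
    then have "card (point_links m n F S) = card {n+1..m}" using P unfolding link_weight_def by simp
    then show "point_links m n F S = {n+1..m}" by (intro card_subset_eq point_links_subset) simp
  qed
  show ?thesis
  proof (intro bexI[OF _ t] ballI)
    fix S assume S: "S \<in> ksubsets {1..n} (k-2)"
    show "pair_links m n F S = (if t \<in> S then ksubsets {n+1..m} 2 else {}) \<and>
      point_links m n F S = (if t \<in> S then {} else {n+1..m})"
      using off[OF S] heavy_links[OF F eq centre[OF S]] by (cases "t \<in> S") auto
  qed
qed

lemma mnk_subset_if_links_subset:
  assumes F: "mnk_intersecting m n k F" and F': "mnk_intersecting m n k F'"
    and links: "\<And>S. S \<in> ksubsets {1..n} (k-2) \<Longrightarrow>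
      pair_links m n F S \<subseteq> pair_links m n F' S \<and> point_links m n F S \<subseteq> point_links m n F' S"
  shows "F \<subseteq> F'"
proof
  fix G assume G: "G \<in> F"
  have "card (G \<inter> {n+1..m}) \<le> 2" by (rule card_new_le_two[OF F G])
  then consider "card (G \<inter> {n+1..m}) = 0" | "card (G \<inter> {n+1..m}) = 1" | "card (G \<inter> {n+1..m}) = 2"
    by linarith
  then show "G \<in> F'"
  proof cases
    case 1
    then have "G \<in> ksubsets {1..n} k" using members_no_new[OF F] G by blast
    then show ?thesis using F' unfolding mnk_intersecting_def by blast
  next
    case 2
    then obtain y where y: "G \<inter> {n+1..m} = {y}" by (rule card_1_singletonE)
    have "y \<in> point_links m n F' ({1..n} - G)"
      using member_one_new(1,2)[OF F G y] links by blast
    then show ?thesis using member_one_new(3)[OF F G y] unfolding point_links_def by auto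
  next
    case 3
    have "G \<inter> {n+1..m} \<in> pair_links m n F' (G \<inter> {1..n})"
      using member_two_new[OF F G 3] links by blast
    moreover have "G = (G \<inter> {1..n}) \<union> (G \<inter> {n+1..m})"
      using old_new_split(1) mnk_intersecting_member[OF F G] by blast
    ultimately show ?thesis unfolding pair_links_def by auto
  qed
qed

section \<open>The families \<open>H\<^sub>t\<close>\<close>

lemma H_new_sizes: "{1..2*k-n-1} = {1, 2}"
proof -
  have "2*k - n - 1 = 2" using k n by linarith
  then show ?thesis by auto
qed

context
  fixes t assumes t: "t \<in> {1..n}"
begin

lemma H_memberD:
  assumes G: "G \<in> H m n k t"
  shows "G \<in> ksubsets {1..m} k" "card (G \<inter> {n+1..m}) \<le> 2" "G \<inter> {n+1..m} \<noteq> {} \<Longrightarrow> t \<in> G"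
proof -
  have "G \<in> ksubsets {1..m} k \<and> card (G \<inter> {n+1..m}) \<le> 2 \<and> (G \<inter> {n+1..m} \<noteq> {} \<longrightarrow> t \<in> G)"
  proof (cases "G \<in> ksubsets {1..n} k")
    case True
    then have "G \<inter> {n+1..m} = {}" unfolding ksubsets_def by (force simp: subset_iff)
    then show ?thesis using True n_less_m unfolding ksubsets_def by auto
  next
    case False
    then obtain i A B where i: "i \<in> {1, 2}" and G_eq: "G = A \<union> B \<union> {t}"
      and A: "A \<subseteq> {1..n} - {t}" "card A = k-i-1" and B: "B \<subseteq> {n+1..m}" "card B = i"
      using G unfolding H_def H_new_sizes ksubsets_def by blast
    have fin: "finite A" "finite B" using finite_subset[OF A(1)] finite_subset[OF B(1)] by auto
    have "A \<inter> B = {}" "t \<notin> A \<union> B" using A(1) B(1) t by (fastforce simp: subset_iff)+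
    then have "card G = card A + card B + 1" using G_eq fin by (simp add: card_Un_disjoint)
    then have "card G = k" using A(2) B(2) i k by auto
    moreover have "G \<inter> {n+1..m} = B" using G_eq A(1) B(1) t by auto
    moreover have "G \<subseteq> {1..m}" using G_eq A(1) B(1) t n_less_m by auto
    ultimately show ?thesis using B(2) i G_eq unfolding ksubsets_def by auto
  qed
  then show "G \<in> ksubsets {1..m} k" "card (G \<inter> {n+1..m}) \<le> 2" "G \<inter> {n+1..m} \<noteq> {} \<Longrightarrow> t \<in> G"
    by auto
qed

lemma H_memberI:
  assumes G: "G \<in> ksubsets {1..m} k" "card (G \<inter> {n+1..m}) \<le> 2" "G \<inter> {n+1..m} \<noteq> {} \<longrightarrow> t \<in> G"
  shows "G \<in> H m n k t"
proof (cases "G \<inter> {n+1..m} = {}")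
  case True
  then have "G \<in> ksubsets {1..n} k" using old_new_split(1)[of G m n] G(1) unfolding ksubsets_def by auto
  then show ?thesis unfolding H_def by simp
next
  case False
  define i where "i = card (G \<inter> {n+1..m})"
  have "i \<noteq> 0" using False unfolding i_def by simp
  moreover have "i \<le> 2" using G(2) unfolding i_def .
  ultimately have i: "i \<in> {1, 2}" by auto
  have tG: "t \<in> G" using G(3) False by auto
  define A where "A = G \<inter> {1..n} - {t}"
  define B where "B = G \<inter> {n+1..m}"
  have "card (G \<inter> {1..n}) = k - i" using old_new_split(2)[of G m n] G(1) unfolding i_def ksubsets_def by auto
  then have "A \<in> ksubsets ({1..n} - {t}) (k-i-1)" using tG t unfolding A_def ksubsets_def by auto
  moreover have "B \<in> ksubsets {n+1..m} i" unfolding B_def i_def ksubsets_def by auto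
  moreover have "G = A \<union> B \<union> {t}" using old_new_split(1)[of G m n] G(1) tG unfolding A_def B_def ksubsets_def by auto
  ultimately show ?thesis using i unfolding H_def H_new_sizes by blast
qed

text \<open>A member of \<open>H\<close> avoiding \<open>t\<close> is a \<open>k\<close>-subset of \<open>[n] - {t}\<close>, a set of size \<open>2k - 4\<close>,
  and every member of \<open>H\<close> has at least \<open>k - 3\<close> points there.\<close>
lemma H_meets_member_avoiding:
  assumes G1: "G1 \<in> H m n k t" and G2: "G2 \<in> H m n k t" and nt: "t \<notin> G1"
  shows "G1 \<inter> G2 \<noteq> {}"
proof
  assume disj: "G1 \<inter> G2 = {}"
  have G1': "G1 \<subseteq> {1..m}" "card G1 = k" "G1 \<inter> {n+1..m} = {}"
    using H_memberD[OF G1] nt unfolding ksubsets_def by auto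
  have G2': "G2 \<subseteq> {1..m}" "card G2 = k" "card (G2 \<inter> {n+1..m}) \<le> 2"
    using H_memberD[OF G2] unfolding ksubsets_def by auto
  define A where "A = G2 \<inter> {1..n} - {t}"
  have "G1 \<subseteq> {1..n} - {t}" using old_new_split(1)[OF G1'(1), of n] G1'(3) nt by auto
  moreover have "A \<subseteq> {1..n} - {t}" unfolding A_def by auto
  moreover have "G1 \<inter> A = {}" using disj unfolding A_def by auto
  ultimately have "card G1 + card A \<le> card ({1..n} - {t})"
    by (metis card_Un_disjoint card_mono finite_Diff finite_atLeastAtMost finite_subset le_sup_iff)
  moreover have "card ({1..n} - {t}) = 2*k - 4" using t n k by simp
  moreover have "card (G2 \<inter> {1..n}) \<ge> k - 2" using old_new_split(2)[OF G2'(1), of n] G2'(2,3) by linarith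
  then have "card A \<ge> k - 3" using diff_card_le_card_Diff[of "{t}" "G2 \<inter> {1..n}"] unfolding A_def by simp
  ultimately show False using G1'(2) k by linarith
qed

lemma H_mnk_intersecting: "mnk_intersecting m n k (H m n k t)"
  unfolding mnk_intersecting_def intersecting_def
proof (intro conjI ballI)
  show "ksubsets {1..n} k \<subseteq> H m n k t" unfolding H_def by auto
  show "H m n k t \<subseteq> ksubsets {1..m} k" using H_memberD(1) by blast
  fix A B assume A: "A \<in> H m n k t" and B: "B \<in> H m n k t"
  then show "A \<inter> B \<noteq> {}"
    using H_meets_member_avoiding[OF A B] H_meets_member_avoiding[OF B A] by blast
qed

lemma H_links:
  assumes S: "S \<in> ksubsets {1..n} (k-2)"
  shows "pair_links m n (H m n k t) S = (if t \<in> S then ksubsets {n+1..m} 2 else {})"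
    and "point_links m n (H m n k t) S = (if t \<in> S then {} else {n+1..m})"
proof -
  have S': "S \<subseteq> {1..n}" "card S = k - 2" "finite S" using S finite_subset unfolding ksubsets_def by auto
  have pair: "S \<union> e \<in> H m n k t \<longleftrightarrow> t \<in> S" if e: "e \<in> ksubsets {n+1..m} 2" for e
  proof -
    have e': "e \<subseteq> {n+1..m}" "card e = 2" "finite e" using e finite_subset unfolding ksubsets_def by auto
    have "card (S \<union> e) = k" using card_Un_disjoint[OF S'(3) e'(3) old_union_new(3)[OF S'(1) e'(1)]] S'(2) e'(2) k
      by simp
    moreover have "(S \<union> e) \<inter> {n+1..m} = e" by (rule old_union_new(2)[OF S'(1) e'(1)])
    moreover have "t \<notin> e" "e \<noteq> {}" using e'(1,2) t by auto
    moreover have "S \<union> e \<subseteq> {1..m}" using S'(1) e'(1) n_less_m by auto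
    ultimately show ?thesis using H_memberD[of "S \<union> e"] H_memberI[of "S \<union> e"] e'(2)
      unfolding ksubsets_def by auto
  qed
  have point: "insert y ({1..n} - S) \<in> H m n k t \<longleftrightarrow> t \<notin> S" if y: "y \<in> {n+1..m}" for y
  proof -
    have "card ({1..n} - S) = n - (k-2)" using card_Diff_subset[OF S'(3,1)] S'(2) by simp
    moreover have "y \<notin> {1..n} - S" using y by auto
    ultimately have "card (insert y ({1..n} - S)) = k" using n k by simp
    moreover have "insert y ({1..n} - S) \<inter> {n+1..m} = {y}" using y by auto
    moreover have "insert y ({1..n} - S) \<subseteq> {1..m}" using y n_less_m by auto
    moreover have "t \<in> insert y ({1..n} - S) \<longleftrightarrow> t \<notin> S" using t y by auto
    ultimately show ?thesis using H_memberD[of "insert y ({1..n} - S)"] H_memberI[of "insert y ({1..n} - S)"]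
      unfolding ksubsets_def by auto
  qed
  show "pair_links m n (H m n k t) S = (if t \<in> S then ksubsets {n+1..m} 2 else {})"
    using pair unfolding pair_links_def by auto
  show "point_links m n (H m n k t) S = (if t \<in> S then {} else {n+1..m})"
    using point unfolding point_links_def by auto
qed

end

lemma card_H:
  assumes t: "t \<in> {1..n}"
  shows "card (H m n k t) = h m n k"
proof -
  let ?K = "ksubsets {1..n} (k-2)" and ?d = "((m - n) choose 2) - (m - n)"
  have w: "link_weight m n (H m n k t) S = (m - n) + (if t \<in> S then ?d else 0)" if "S \<in> ?K" for S
    using H_links[OF t that] card_pairs_new new_less_pairs unfolding link_weight_def by auto
  have star: "card {S \<in> ?K. t \<in> S} = (2*(k-2)) choose (k-2-1)"
    using card_subsets_containing[of "{1..n}" t "k-2"] t n_odd k unfolding ksubsets_def by simp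
  have "(\<Sum>S\<in>?K. link_weight m n (H m n k t) S) = (\<Sum>S\<in>?K. (m - n) + (if t \<in> S then ?d else 0))"
    using w by (rule sum.cong[OF refl])
  also have "\<dots> = (m - n) * card ?K + ?d * card {S \<in> ?K. t \<in> S}"
    using sum.inter_filter[OF finite_old_subsets, of "\<lambda>_. ?d" "\<lambda>S. t \<in> S"] by (simp add: sum.distrib mult.commute)
  finally show ?thesis
    unfolding card_eq_sum_link_weight[OF H_mnk_intersecting[OF t]] h_eq_caps star by simp
qed

lemma max_family_eq_H:
  assumes F: "mnk_intersecting m n k F" and eq: "card F = h m n k"
  shows "\<exists>t\<in>{1..n}. F = H m n k t"
proof -
  obtain t where t: "t \<in> {1..n}" and links: "\<forall>S\<in>ksubsets {1..n} (k-2).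
      pair_links m n F S = (if t \<in> S then ksubsets {n+1..m} 2 else {}) \<and>
      point_links m n F S = (if t \<in> S then {} else {n+1..m})"
    using links_at_equality[OF F eq] by blast
  have same: "pair_links m n F S = pair_links m n (H m n k t) S \<and>
      point_links m n F S = point_links m n (H m n k t) S" if "S \<in> ksubsets {1..n} (k-2)" for S
    using links that H_links[OF t that] by simp
  have "F = H m n k t"
  proof
    show "F \<subseteq> H m n k t" by (rule mnk_subset_if_links_subset[OF F H_mnk_intersecting[OF t]]) (use same in simp)
    show "H m n k t \<subseteq> F" by (rule mnk_subset_if_links_subset[OF H_mnk_intersecting[OF t] F]) (use same in simp)
  qed
  then show ?thesis using t by blast
qed

lemma alpha_eq_h: "alpha m n k = h m n k"
  unfolding alpha_def
proof (rule Max_eqI)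
  have "{F. mnk_intersecting m n k F} \<subseteq> Pow (ksubsets {1..m} k)"
    unfolding mnk_intersecting_def by auto
  moreover have "finite (ksubsets {1..m} k)" unfolding ksubsets_def by (rule finite_subsets_with) simp
  ultimately show "finite (card ` {F. mnk_intersecting m n k F})" by (meson finite_Pow_iff finite_imageI finite_subset)
  show "c \<le> h m n k" if "c \<in> card ` {F. mnk_intersecting m n k F}" for c
    using that card_le_h by auto
  have "1 \<in> {1..n}" using n_odd by simp
  then show "h m n k \<in> card ` {F. mnk_intersecting m n k F}"
    using H_mnk_intersecting card_H by (metis (mono_tags, lifting) image_eqI mem_Collect_eq)
qed

end

theorem theorem11:
  fixes k m n :: nat
  assumes "k \<ge> 3" and "m > 2*k" and "n = 2*k - 3"
  shows "alpha m n k = h m n k \<and>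
    (\<forall>F. mnk_intersecting m n k F \<and> card F = alpha m n k \<longrightarrow>
         (\<exists>t\<in>{1..n}. F = H m n k t))"
proof -
  interpret mnk_2k_minus_3 k m n using assms by unfold_locales
  show ?thesis using alpha_eq_h max_family_eq_H by auto
qed

end
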